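(* Let $\mathcal{H}$ be a complex Hilbert space, let $T\in\mathcal{B}(\mathcal{H})$ be a $\Delta_T$-regular concave operator and let $m\ge 2$ be an integer. Then $T$ is $m$-hyperexpansive if and only if the compression $\widehat{T}=P_{\overline{\mathcal{R}(\Delta_T)}}T|_{\overline{\mathcal{R}(\Delta_T)}}$ of $T$ to $\overline{\mathcal{R}(\Delta_T)}$ is an $(m-1)$-hypercontraction.
   Context: $\Delta_T=T^*T-I$. $T$ is concave if $T^{*2}T^2-2T^*T+I\le0$, and $\Delta_T$-regular if $\Delta_TT=\Delta_T^{1/2}T\Delta_T^{1/2}$. For an operator $A$ and $n\ge1$ let $B_n(A)=\sum_{j=0}^n(-1)^j\binom{n}{j}A^{*j}A^j$. $A$ is $m$-hyperexpansive if $B_n(A)\le 0$ for all $1\le n\le m$, and an $m$-hypercontraction if $B_n(A)\ge0$ for all $1\le n\le m$. *)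

theory Defs
  imports "HOL-Analysis.Analysis" "HOL-Library.Complex_Order"
begin

text \<open>A complex Hilbert space: a (real) Banach space carrying a complex scalar
multiplication compatible with the real one, and a complex inner product
(linear in the first argument, conjugate symmetric) inducing the norm.\<close>

class complex_hilbert = banach +
  fixes hscale :: "complex \<Rightarrow> 'a \<Rightarrow> 'a"
    and hinner :: "'a \<Rightarrow> 'a \<Rightarrow> complex"
  assumes hscale_add_right: "hscale a (x + y) = hscale a x + hscale a y"
    and hscale_add_left: "hscale (a + b) x = hscale a x + hscale b x"
    and hscale_hscale: "hscale a (hscale b x) = hscale (a * b) x"
    and hscale_of_real: "hscale (complex_of_real r) x = scaleR r x"
    and hinner_sym: "hinner x y = cnj (hinner y x)"
    and hinner_add_left: "hinner (x + y) z = hinner x z + hinner y z"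
    and hinner_hscale_left: "hinner (hscale a x) y = a * hinner x y"
    and hinner_norm: "hinner x x = complex_of_real ((norm x)\<^sup>2)"

definition bounded_op :: "('a::complex_hilbert \<Rightarrow> 'a) \<Rightarrow> bool" where
  "bounded_op T \<longleftrightarrow> (\<forall>x y. T (x + y) = T x + T y) \<and> (\<forall>a x. T (hscale a x) = hscale a (T x))
      \<and> (\<exists>K. \<forall>x. norm (T x) \<le> K * norm x)"

definition closed_csubspace :: "'a::complex_hilbert set \<Rightarrow> bool" where
  "closed_csubspace M \<longleftrightarrow> closed M \<and> 0 \<in> M \<and> (\<forall>x\<in>M. \<forall>y\<in>M. x + y \<in> M)
      \<and> (\<forall>a. \<forall>x\<in>M. hscale a x \<in> M)"

text \<open>Adjoint of an operator S on a closed subspace M (viewed as a Hilbert space itself);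
outside M it is set to 0.  For M = UNIV this is the usual Hilbert space adjoint.\<close>
definition adj_on :: "'a::complex_hilbert set \<Rightarrow> ('a \<Rightarrow> 'a) \<Rightarrow> 'a \<Rightarrow> 'a" where
  "adj_on M S y = (if y \<in> M then (THE z. z \<in> M \<and> (\<forall>x\<in>M. hinner (S x) y = hinner x z)) else 0)"

abbreviation adj :: "('a::complex_hilbert \<Rightarrow> 'a) \<Rightarrow> 'a \<Rightarrow> 'a" where
  "adj S \<equiv> adj_on UNIV S"

definition Bop :: "'a::complex_hilbert set \<Rightarrow> ('a \<Rightarrow> 'a) \<Rightarrow> nat \<Rightarrow> 'a \<Rightarrow> 'a" where
  "Bop M A n x = (\<Sum>j\<le>n. hscale ((-1) ^ j * of_nat (n choose j)) ((adj_on M A ^^ j) ((A ^^ j) x)))"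

text \<open>Operator order on M: B \<le> 0 resp. B \<ge> 0 (in the ordering of complex numbers from
Complex_Order, z \<ge> 0 iff z is real and nonnegative).\<close>
definition op_nonneg_on :: "'a::complex_hilbert set \<Rightarrow> ('a \<Rightarrow> 'a) \<Rightarrow> bool" where
  "op_nonneg_on M B \<longleftrightarrow> (\<forall>x\<in>M. hinner (B x) x \<ge> 0)"

definition op_nonpos_on :: "'a::complex_hilbert set \<Rightarrow> ('a \<Rightarrow> 'a) \<Rightarrow> bool" where
  "op_nonpos_on M B \<longleftrightarrow> (\<forall>x\<in>M. hinner (B x) x \<le> 0)"

definition m_hyperexpansive :: "nat \<Rightarrow> ('a::complex_hilbert \<Rightarrow> 'a) \<Rightarrow> bool" where
  "m_hyperexpansive m A \<longleftrightarrow> (\<forall>n. 1 \<le> n \<and> n \<le> m \<longrightarrow> op_nonpos_on UNIV (Bop UNIV A n))"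

definition m_hypercontraction_on :: "'a::complex_hilbert set \<Rightarrow> nat \<Rightarrow> ('a \<Rightarrow> 'a) \<Rightarrow> bool" where
  "m_hypercontraction_on M m A \<longleftrightarrow> (\<forall>n. 1 \<le> n \<and> n \<le> m \<longrightarrow> op_nonneg_on M (Bop M A n))"

definition Delta :: "('a::complex_hilbert \<Rightarrow> 'a) \<Rightarrow> 'a \<Rightarrow> 'a" where
  "Delta T x = adj T (T x) - x"

definition op_sqrt :: "('a::complex_hilbert \<Rightarrow> 'a) \<Rightarrow> 'a \<Rightarrow> 'a" where
  "op_sqrt A = (THE B. bounded_op B \<and> op_nonneg_on UNIV B \<and> (\<forall>x. B (B x) = A x))"

definition concave_op :: "('a::complex_hilbert \<Rightarrow> 'a) \<Rightarrow> bool" where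
  "concave_op T \<longleftrightarrow>
     op_nonpos_on UNIV (\<lambda>x. (adj T ^^ 2) ((T ^^ 2) x) - hscale 2 (adj T (T x)) + x)"

definition Delta_regular :: "('a::complex_hilbert \<Rightarrow> 'a) \<Rightarrow> bool" where
  "Delta_regular T \<longleftrightarrow>
     (\<forall>x. Delta T (T x) = op_sqrt (Delta T) (T (op_sqrt (Delta T) x)))"

definition proj :: "'a::complex_hilbert set \<Rightarrow> 'a \<Rightarrow> 'a" where
  "proj M x = (THE p. p \<in> M \<and> (\<forall>y\<in>M. hinner (x - p) y = 0))"

definition compression :: "'a::complex_hilbert set \<Rightarrow> ('a \<Rightarrow> 'a) \<Rightarrow> 'a \<Rightarrow> 'a" where
  "compression M T x = (if x \<in> M then proj M (T x) else 0)"

end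

theory Submission
  imports Defs
begin

(* Concavity forces the defect operator Delta = T* T - I to be nonnegative, so it has a
   positive square root S, and ||S u||^2 = ||T u||^2 - ||u||^2. Delta-regularity makes S
   intertwine T with its compression T' to M = closure (range Delta): S T = T' S. Hence the
   quadratic form of B_(n+1)(T) at x is, by a finite-difference identity, minus the quadratic
   form of B_n(T') at S x. Since the range of S is dense in M, B_(n+1)(T) <= 0 holds if and only
   if B_n(T') >= 0 holds on M. *)

section \<open>Complex Hilbert spaces\<close>

lemma hscale_zero_left [simp]: "hscale 0 (x::'a::complex_hilbert) = 0"
  using hscale_of_real[of 0 x] by simp

lemma hscale_one [simp]: "hscale 1 (x::'a::complex_hilbert) = x"
  using hscale_of_real[of 1 x] by simp

lemma hscale_zero_right [simp]: "hscale a (0::'a::complex_hilbert) = 0"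
proof -
  have "hscale a 0 + hscale a 0 = hscale a (0::'a) + 0"
    using hscale_add_right[of a 0 0] by simp
  then show ?thesis
    by (rule add_left_imp_eq)
qed

lemma hscale_minus_left: "hscale (- a) (x::'a::complex_hilbert) = - hscale a x"
proof -
  have "hscale a x + hscale (- a) x = 0"
    by (simp flip: hscale_add_left)
  then show ?thesis
    by (simp add: add_eq_0_iff2)
qed

lemma hscale_minus_right: "hscale a (- (x::'a::complex_hilbert)) = - hscale a x"
proof -
  have "hscale a x + hscale a (- x) = 0"
    by (simp flip: hscale_add_right)
  then show ?thesis
    by (simp add: add_eq_0_iff2)
qed

lemma hscale_diff_right: "hscale a ((x::'a::complex_hilbert) - y) = hscale a x - hscale a y"
  unfolding diff_conv_add_uminus by (simp only: hscale_add_right hscale_minus_right)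

lemma hscale_scaleR: "hscale a (scaleR r (x::'a::complex_hilbert)) = scaleR r (hscale a x)"
  by (metis hscale_hscale hscale_of_real mult.commute)

lemma hinner_zero_left [simp]: "hinner 0 (x::'a::complex_hilbert) = 0"
proof -
  have "hinner 0 x + hinner 0 x = hinner (0::'a) x + 0"
    using hinner_add_left[of 0 0 x] by simp
  then show ?thesis
    by (rule add_left_imp_eq)
qed

lemma hinner_zero_right [simp]: "hinner (x::'a::complex_hilbert) 0 = 0"
  by (subst hinner_sym) simp

lemma hinner_add_right: "hinner (x::'a::complex_hilbert) (y + z) = hinner x y + hinner x z"
  by (metis complex_cnj_add hinner_add_left hinner_sym)

lemma hinner_hscale_right: "hinner (x::'a::complex_hilbert) (hscale a y) = cnj a * hinner x y"
  by (metis complex_cnj_cnj complex_cnj_mult hinner_hscale_left hinner_sym)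

lemma hinner_minus_left: "hinner (- (x::'a::complex_hilbert)) y = - hinner x y"
proof -
  have "hinner x y + hinner (- x) y = 0"
    by (simp flip: hinner_add_left)
  then show ?thesis
    by (simp add: add_eq_0_iff2)
qed

lemma hinner_diff_left: "hinner ((x::'a::complex_hilbert) - y) z = hinner x z - hinner y z"
  unfolding diff_conv_add_uminus by (simp only: hinner_add_left hinner_minus_left)

lemma hinner_diff_right: "hinner (x::'a::complex_hilbert) (y - z) = hinner x y - hinner x z"
  by (metis complex_cnj_diff hinner_diff_left hinner_sym)

lemma hinner_scaleR_left: "hinner (scaleR r (x::'a::complex_hilbert)) y = of_real r * hinner x y"
  by (metis hinner_hscale_left hscale_of_real)

lemma hinner_scaleR_right: "hinner (x::'a::complex_hilbert) (scaleR r y) = of_real r * hinner x y"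
  by (metis complex_cnj_complex_of_real hinner_hscale_right hscale_of_real)

lemma Re_hinner_self: "Re (hinner (x::'a::complex_hilbert) x) = (norm x)\<^sup>2"
  by (simp add: hinner_norm)

lemma Im_hinner_self: "Im (hinner (x::'a::complex_hilbert) x) = 0"
  by (simp add: hinner_norm)

lemma hinner_self_nonneg: "hinner (x::'a::complex_hilbert) x \<ge> 0"
  by (simp add: hinner_norm less_eq_complex_def)

lemma hinner_self_eq_0: "hinner (x::'a::complex_hilbert) x = 0 \<longleftrightarrow> x = 0"
  by (simp add: hinner_norm)

lemma norm_hscale: "norm (hscale a (x::'a::complex_hilbert)) = cmod a * norm x"
proof -
  have "complex_of_real ((norm (hscale a x))\<^sup>2) = a * cnj a * complex_of_real ((norm x)\<^sup>2)"
    by (metis hinner_hscale_left hinner_hscale_right hinner_norm mult.assoc)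
  also have "a * cnj a = complex_of_real ((cmod a)\<^sup>2)"
    by (rule complex_norm_square[symmetric])
  finally have "(norm (hscale a x))\<^sup>2 = (cmod a * norm x)\<^sup>2"
    by (metis of_real_eq_iff of_real_mult power_mult_distrib)
  then show ?thesis
    by (simp add: power2_eq_iff_nonneg)
qed

lemma hinner_sum_left: "hinner (sum f A) (y::'a::complex_hilbert) = (\<Sum>i\<in>A. hinner (f i) y)"
  by (induction A rule: infinite_finite_induct) (auto simp: hinner_add_left)

lemma hinner_right_ext: "(\<And>z. hinner z x = hinner z y) \<Longrightarrow> x = (y::'a::complex_hilbert)"
  by (metis eq_iff_diff_eq_0 hinner_diff_right hinner_self_eq_0)

lemma hinner_left_ext: "(\<And>z. hinner x z = hinner y z) \<Longrightarrow> x = (y::'a::complex_hilbert)"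
  by (metis eq_iff_diff_eq_0 hinner_diff_left hinner_self_eq_0)

lemma complex_of_real_nonneg_iff: "complex_of_real r \<ge> 0 \<longleftrightarrow> r \<ge> 0"
  by (simp add: less_eq_complex_def)

lemma complex_of_real_nonpos_iff: "complex_of_real r \<le> 0 \<longleftrightarrow> r \<le> 0"
  by (simp add: less_eq_complex_def)

lemma quadratic_nonneg_imp_le:
  fixes a b c :: real
  assumes nonneg: "\<And>s. 0 \<le> a - 2 * s * c + s\<^sup>2 * c * b" and "c \<ge> 0" "b \<ge> 0"
  shows "c \<le> a * b"
proof (cases "b = 0")
  case True
  have "c = 0"
  proof (rule ccontr)
    assume "c \<noteq> 0"
    with \<open>c \<ge> 0\<close> have "c > 0" by simp
    have "0 \<le> a - 2 * ((\<bar>a\<bar> + 1) / (2 * c)) * c"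
      using nonneg[of "(\<bar>a\<bar> + 1) / (2 * c)"] True by simp
    also have "\<dots> = a - (\<bar>a\<bar> + 1)"
      using \<open>c > 0\<close> by (simp add: field_simps)
    finally show False by linarith
  qed
  with True show ?thesis by simp
next
  case False
  with \<open>b \<ge> 0\<close> have "b > 0" by simp
  have "0 \<le> a - 2 * (1 / b) * c + (1 / b)\<^sup>2 * c * b"
    by (rule nonneg)
  also have "\<dots> = a - c / b"
    using \<open>b > 0\<close> by (simp add: field_simps power2_eq_square)
  finally show ?thesis
    using \<open>b > 0\<close> by (simp add: field_simps)
qed

text \<open>Positive definiteness is not assumed, so this also covers the forms \<open>\<langle>B x, y\<rangle>\<close> of positive
  operators.\<close>
lemma hermitian_form_cauchy_schwarz:
  fixes f :: "'a::complex_hilbert \<Rightarrow> 'a \<Rightarrow> complex"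
  assumes add: "\<And>x y z. f (x + y) z = f x z + f y z"
    and scale: "\<And>a x y. f (hscale a x) y = a * f x y"
    and sym: "\<And>x y. f x y = cnj (f y x)"
    and nonneg: "\<And>x. Re (f x x) \<ge> 0"
  shows "(cmod (f x y))\<^sup>2 \<le> Re (f x x) * Re (f y y)"
proof -
  have add_right: "f x (y + z) = f x y + f x z" for x y z
    by (metis add complex_cnj_add sym)
  have scale_right: "f x (hscale a y) = cnj a * f x y" for a x y
    by (metis complex_cnj_mult scale sym)
  define c where "c = f x y"
  have "0 \<le> Re (f x x) - 2 * s * (cmod c)\<^sup>2 + s\<^sup>2 * (cmod c)\<^sup>2 * Re (f y y)" for s :: real
  proof -
    define t where "t = - (of_real s * c)"
    have "f (x + hscale t y) (x + hscale t y)
        = f x x + cnj t * c + t * cnj c + t * cnj t * f y y"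
      unfolding c_def by (simp only: add add_right scale scale_right sym[of y x])
        (simp add: algebra_simps)
    moreover have "cnj t * c = - of_real s * (c * cnj c)" "t * cnj c = - of_real s * (c * cnj c)"
      "t * cnj t = of_real (s\<^sup>2) * (c * cnj c)"
      unfolding t_def by (simp_all add: power2_eq_square mult_ac)
    moreover have "c * cnj c = of_real ((cmod c)\<^sup>2)"
      by (rule complex_norm_square[symmetric])
    ultimately show ?thesis
      using nonneg[of "x + hscale t y"] by simp
  qed
  then have "(cmod c)\<^sup>2 \<le> Re (f x x) * Re (f y y)"
    by (rule quadratic_nonneg_imp_le) (simp_all add: nonneg)
  then show ?thesis
    by (simp add: c_def)
qed

lemma hinner_cauchy_schwarz: "cmod (hinner x y) \<le> norm x * norm (y::'a::complex_hilbert)"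
proof -
  have "(cmod (hinner x y))\<^sup>2 \<le> Re (hinner x x) * Re (hinner y y)"
    by (rule hermitian_form_cauchy_schwarz)
      (auto simp: hinner_add_left hinner_hscale_left Re_hinner_self intro: hinner_sym)
  also have "\<dots> = (norm x * norm y)\<^sup>2"
    by (simp add: Re_hinner_self power_mult_distrib)
  finally show ?thesis
    by (simp add: power2_le_iff_abs_le)
qed

lemma bounded_bilinear_hinner: "bounded_bilinear (hinner :: 'a::complex_hilbert \<Rightarrow> 'a \<Rightarrow> complex)"
proof
  fix a a' b b' :: 'a and r :: real
  show "hinner (a + a') b = hinner a b + hinner a' b"
    by (rule hinner_add_left)
  show "hinner a (b + b') = hinner a b + hinner a b'"
    by (rule hinner_add_right)
  show "hinner (r *\<^sub>R a) b = r *\<^sub>R hinner a b"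
    by (simp add: hinner_scaleR_left scaleR_conv_of_real)
  show "hinner a (r *\<^sub>R b) = r *\<^sub>R hinner a b"
    by (simp add: hinner_scaleR_right scaleR_conv_of_real)
  show "\<exists>K. \<forall>a b::'a. norm (hinner a b) \<le> norm a * norm b * K"
    by (rule exI[of _ 1]) (simp add: hinner_cauchy_schwarz)
qed

lemmas tendsto_hinner [tendsto_intros] = bounded_bilinear.tendsto[OF bounded_bilinear_hinner]

lemma bounded_linear_hscale: "bounded_linear (hscale a :: 'a::complex_hilbert \<Rightarrow> 'a)"
  by (rule bounded_linear_intro[where K = "cmod a"])
    (auto simp: hscale_add_right hscale_scaleR norm_hscale)

lemma parallelogram_law:
  "(norm (x + y))\<^sup>2 + (norm (x - y))\<^sup>2 = 2 * (norm x)\<^sup>2 + 2 * (norm (y::'a::complex_hilbert))\<^sup>2"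
proof -
  have "hinner (x + y) (x + y) + hinner (x - y) (x - y) = 2 * hinner x x + 2 * hinner y y"
    by (simp add: hinner_add_left hinner_add_right hinner_diff_left hinner_diff_right)
  then have "Re (hinner (x + y) (x + y) + hinner (x - y) (x - y)) = Re (2 * hinner x x + 2 * hinner y y)"
    by simp
  then show ?thesis
    by (simp only: Re_hinner_self plus_complex.sel) (simp add: Re_hinner_self)
qed

section \<open>Linear, bounded and positive operators\<close>

definition clinear_op :: "('a::complex_hilbert \<Rightarrow> 'a) \<Rightarrow> bool" where
  "clinear_op B \<longleftrightarrow> (\<forall>x y. B (x + y) = B x + B y) \<and> (\<forall>a x. B (hscale a x) = hscale a (B x))"

lemma clinear_opD:
  assumes "clinear_op B"
  shows clinear_op_add: "B (x + y) = B x + B y"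
    and clinear_op_hscale: "B (hscale a x) = hscale a (B x)"
  using assms by (auto simp: clinear_op_def)

lemma clinear_op_scaleR: "clinear_op B \<Longrightarrow> B (scaleR r x) = scaleR r (B x)"
  by (metis clinear_op_hscale hscale_of_real)

lemma clinear_op_zero: "clinear_op B \<Longrightarrow> B 0 = 0"
  by (metis clinear_op_hscale hscale_zero_left)

lemma clinear_op_diff: "clinear_op B \<Longrightarrow> B (x - y) = B x - B y"
  by (metis clinear_op_add diff_add_cancel eq_diff_eq)

lemma clinear_op_funpow: "clinear_op B \<Longrightarrow> clinear_op (B ^^ k)"
  by (induction k) (simp_all add: clinear_op_def)

lemma bounded_op_clinear_op: "bounded_op B \<Longrightarrow> clinear_op B"
  by (simp add: bounded_op_def clinear_op_def)

lemma bounded_opI: "clinear_op B \<Longrightarrow> (\<And>x. norm (B x) \<le> K * norm x) \<Longrightarrow> bounded_op B"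
  by (auto simp: bounded_op_def clinear_op_def)

lemma bounded_op_nonneg_bound:
  assumes "bounded_op B"
  obtains K where "K \<ge> 0" "\<And>x. norm (B x) \<le> K * norm x"
proof -
  obtain K where K: "\<And>x. norm (B x) \<le> K * norm x"
    using assms by (auto simp: bounded_op_def)
  have "norm (B x) \<le> max K 0 * norm x" for x
    by (rule order_trans[OF K]) (simp add: mult_right_mono)
  then show ?thesis
    using that[of "max K 0"] by simp
qed

lemma bounded_op_bounded_linear:
  assumes "bounded_op B"
  shows "bounded_linear B"
proof -
  obtain K where K: "\<And>x. norm (B x) \<le> K * norm x"
    using assms by (auto simp: bounded_op_def)
  show ?thesis
    by (rule bounded_linear_intro[where K = K])
      (use bounded_op_clinear_op[OF assms] K in \<open>auto simp: clinear_op_add clinear_op_scaleR mult.commute\<close>)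
qed

text \<open>Polarization with the factors \<open>1\<close> and \<open>\<i>\<close>; over the reals positivity would not imply
  symmetry.\<close>
lemma op_nonneg_selfadjoint:
  assumes B: "clinear_op B" and nonneg: "op_nonneg_on UNIV B"
  shows "hinner (B x) y = hinner x (B y)"
proof -
  have real: "Im (hinner (B u) u) = 0" for u
    using nonneg by (auto simp: op_nonneg_on_def less_eq_complex_def)
  let ?a = "hinner (B x) y" and ?b = "hinner (B y) x"
  have "hinner (B (x + y)) (x + y) = hinner (B x) x + ?a + ?b + hinner (B y) y"
    by (simp add: clinear_opD[OF B] hinner_add_left hinner_add_right)
  then have "Im ?a + Im ?b = 0"
    using real[of "x + y"] real[of x] real[of y] by simp
  moreover have "hinner (B (x + hscale \<i> y)) (x + hscale \<i> y)
      = hinner (B x) x - \<i> * ?a + \<i> * ?b + hinner (B y) y"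
    by (simp add: clinear_opD[OF B] hinner_add_left hinner_add_right hinner_hscale_left
        hinner_hscale_right algebra_simps)
  then have "Re ?b - Re ?a = 0"
    using real[of "x + hscale \<i> y"] real[of x] real[of y] by simp
  ultimately have "?a = cnj ?b"
    by (simp add: complex_eq_iff)
  then show ?thesis
    by (metis hinner_sym)
qed

lemma op_nonneg_cauchy_schwarz:
  assumes B: "clinear_op B" and nonneg: "op_nonneg_on UNIV B"
  shows "(cmod (hinner (B x) y))\<^sup>2 \<le> Re (hinner (B x) x) * Re (hinner (B y) y)"
proof (rule hermitian_form_cauchy_schwarz[where f = "\<lambda>x y. hinner (B x) y"])
  show "hinner (B (x + y)) z = hinner (B x) z + hinner (B y) z" for x y z
    by (simp add: clinear_op_add[OF B] hinner_add_left)
  show "hinner (B (hscale a x)) y = a * hinner (B x) y" for a x y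
    by (simp add: clinear_op_hscale[OF B] hinner_hscale_left)
  show "hinner (B x) y = cnj (hinner (B y) x)" for x y
    by (metis op_nonneg_selfadjoint[OF B nonneg] hinner_sym)
  show "0 \<le> Re (hinner (B x) x)" for x
    using nonneg by (auto simp: op_nonneg_on_def less_eq_complex_def)
qed

lemma op_nonneg_form_eq_0_imp_eq_0:
  assumes B: "clinear_op B" and nonneg: "op_nonneg_on UNIV B" and "Re (hinner (B x) x) = 0"
  shows "B x = 0"
proof -
  have "(cmod (hinner (B x) (B x)))\<^sup>2 \<le> 0"
    using op_nonneg_cauchy_schwarz[OF B nonneg, of x "B x"] assms(3) by simp
  then show ?thesis
    by (simp add: hinner_self_eq_0)
qed

lemma norm_sq_le_form_if_op_nonneg_le_id:
  assumes B: "clinear_op B" and nonneg: "op_nonneg_on UNIV B"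
    and le_id: "\<And>x. Re (hinner (B x) x) \<le> (norm x)\<^sup>2"
  shows "(norm (B x))\<^sup>2 \<le> Re (hinner (B x) x)"
proof (cases "B x = 0")
  case False
  have "((norm (B x))\<^sup>2)\<^sup>2 = (cmod (hinner (B x) (B x)))\<^sup>2"
    by (simp add: hinner_norm norm_power)
  also have "\<dots> \<le> Re (hinner (B x) x) * Re (hinner (B (B x)) (B x))"
    by (rule op_nonneg_cauchy_schwarz[OF B nonneg])
  also have "\<dots> \<le> Re (hinner (B x) x) * (norm (B x))\<^sup>2"
    using nonneg by (intro mult_left_mono le_id) (auto simp: op_nonneg_on_def less_eq_complex_def)
  finally show ?thesis
    using False by (simp add: power2_eq_square)
next
  case True
  then show ?thesis
    using nonneg by (auto simp: op_nonneg_on_def less_eq_complex_def)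
qed

lemma norm_le_if_op_nonneg_le_id:
  assumes "clinear_op B" "op_nonneg_on UNIV B" "\<And>x. Re (hinner (B x) x) \<le> (norm x)\<^sup>2"
  shows "norm (B x) \<le> norm x"
proof (rule power2_le_imp_le)
  show "(norm (B x))\<^sup>2 \<le> (norm x)\<^sup>2"
    using norm_sq_le_form_if_op_nonneg_le_id[OF assms, of x] assms(3)[of x] by linarith
qed simp

section \<open>Orthogonal projections and adjoints\<close>

lemma closed_csubspace_diff: "closed_csubspace M \<Longrightarrow> x \<in> M \<Longrightarrow> y \<in> M \<Longrightarrow> x - y \<in> M"
  unfolding closed_csubspace_def by (metis diff_conv_add_uminus hscale_minus_left hscale_one)

lemma closed_csubspace_scaleR: "closed_csubspace M \<Longrightarrow> x \<in> M \<Longrightarrow> scaleR r x \<in> M"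
  unfolding closed_csubspace_def by (metis hscale_of_real)

lemma closed_csubspace_UNIV: "closed_csubspace (UNIV :: 'a::complex_hilbert set)"
  by (simp add: closed_csubspace_def)

lemma closed_csubspace_closure:
  fixes S :: "'a::complex_hilbert set"
  assumes "0 \<in> S" "\<And>x y. x \<in> S \<Longrightarrow> y \<in> S \<Longrightarrow> x + y \<in> S"
    and "\<And>a x. x \<in> S \<Longrightarrow> hscale a x \<in> S"
  shows "closed_csubspace (closure S)"
  unfolding closed_csubspace_def
proof (intro conjI ballI allI)
  show "closed (closure S)" "0 \<in> closure S"
    using assms(1) closure_subset by auto
  fix x y assume x: "x \<in> closure S" and y: "y \<in> closure S"
  obtain u v where u: "\<And>n. u n \<in> S" "u \<longlonglongrightarrow> x" and v: "\<And>n. v n \<in> S" "v \<longlonglongrightarrow> y"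
    using x y by (meson closure_sequential)
  have "(\<lambda>n. u n + v n) \<longlonglongrightarrow> x + y"
    by (intro tendsto_intros u v)
  then show "x + y \<in> closure S"
    unfolding closure_sequential by (intro exI[of _ "\<lambda>n. u n + v n"]) (use u v assms(2) in auto)
next
  fix a x assume "x \<in> closure S"
  then obtain u where u: "\<And>n. u n \<in> S" "u \<longlonglongrightarrow> x"
    by (meson closure_sequential)
  have "(\<lambda>n. hscale a (u n)) \<longlonglongrightarrow> hscale a x"
    by (rule bounded_linear.tendsto[OF bounded_linear_hscale u(2)])
  then show "hscale a x \<in> closure S"
    unfolding closure_sequential by (intro exI[of _ "\<lambda>n. hscale a (u n)"]) (use u assms(3) in auto)
qed

lemma closed_csubspace_closure_range:
  assumes B: "clinear_op B"
  shows "closed_csubspace (closure (range B))"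
proof (rule closed_csubspace_closure)
  show "0 \<in> range B"
    by (metis clinear_op_zero[OF B] rangeI)
  show "x + y \<in> range B" if "x \<in> range B" "y \<in> range B" for x y
    using that by (auto simp flip: clinear_op_add[OF B])
  show "hscale a x \<in> range B" if "x \<in> range B" for a x
    using that by (auto simp flip: clinear_op_hscale[OF B])
qed

lemma orthogonal_if_norm_minimal:
  fixes u y :: "'a::complex_hilbert"
  assumes minimal: "\<And>t. norm u \<le> norm (u - hscale t y)"
  shows "hinner u y = 0"
proof (cases "y = 0")
  case False
  define c where "c = hinner u y"
  define n where "n = (norm y)\<^sup>2"
  have "n > 0"
    using False by (simp add: n_def)
  define t where "t = c / of_real n"
  have "hinner (u - hscale t y) (u - hscale t y)
      = hinner u u - cnj t * hinner u y - t * hinner y u + t * cnj t * hinner y y"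
    by (simp add: hinner_diff_left hinner_diff_right hinner_hscale_left hinner_hscale_right
        algebra_simps)
  also have "\<dots> = hinner u u - of_real ((cmod c)\<^sup>2 / n)"
  proof -
    have "hinner y u = cnj c" "hinner y y = of_real n"
      by (simp_all add: c_def n_def hinner_norm flip: hinner_sym)
    moreover have "c * cnj c = (of_real (cmod c))\<^sup>2" "cnj c * c = (of_real (cmod c))\<^sup>2"
      by (metis complex_norm_square of_real_power, metis complex_norm_square of_real_power mult.commute)
    ultimately show ?thesis
      using \<open>n > 0\<close> by (simp add: t_def c_def[symmetric] field_simps power2_eq_square)
  qed
  finally have "(norm (u - hscale t y))\<^sup>2 = (norm u)\<^sup>2 - (cmod c)\<^sup>2 / n"
    by (metis Re_complex_of_real Re_hinner_self minus_complex.sel)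
  moreover have "(norm u)\<^sup>2 \<le> (norm (u - hscale t y))\<^sup>2"
    using minimal[of t] by (simp add: power_mono)
  ultimately have "(cmod c)\<^sup>2 / n \<le> 0"
    by simp
  with \<open>n > 0\<close> show ?thesis
    by (simp add: c_def divide_le_0_iff)
qed simp

text \<open>A minimizing sequence is Cauchy by the parallelogram law.\<close>
lemma closed_csubspace_best_approximation:
  fixes M :: "'a::complex_hilbert set"
  assumes M: "closed_csubspace M"
  shows "\<exists>p\<in>M. \<forall>m\<in>M. norm (x - p) \<le> norm (x - m)"
proof -
  define d where "d = Inf ((\<lambda>m. (norm (x - m))\<^sup>2) ` M)"
  have "0 \<in> M"
    using M by (simp add: closed_csubspace_def)
  have d_le: "d \<le> (norm (x - m))\<^sup>2" if "m \<in> M" for m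
    unfolding d_def using that by (intro cInf_lower bdd_belowI[of _ 0]) auto
  have "\<exists>m\<in>M. (norm (x - m))\<^sup>2 < d + 1 / Suc n" for n
    using cInf_lessD[of "(\<lambda>m. (norm (x - m))\<^sup>2) ` M" "d + 1 / Suc n"] \<open>0 \<in> M\<close>
    by (auto simp: d_def)
  then obtain m where m_in: "\<And>n. m n \<in> M" and m_less: "\<And>n. (norm (x - m n))\<^sup>2 < d + 1 / Suc n"
    by metis
  have m_close: "(norm (m i - m j))\<^sup>2 \<le> 2 / Suc i + 2 / Suc j" for i j
  proof -
    have "scaleR (1/2) (m i + m j) \<in> M"
      using M m_in by (auto simp: closed_csubspace_def intro: closed_csubspace_scaleR)
    then have "4 * d \<le> (norm (scaleR 2 (x - scaleR (1/2) (m i + m j))))\<^sup>2"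
      using d_le by (simp add: power_mult_distrib)
    also have "scaleR 2 (x - scaleR (1/2) (m i + m j)) = (x - m i) + (x - m j)"
      by (simp add: algebra_simps scaleR_2)
    finally have "4 * d \<le> (norm ((x - m i) + (x - m j)))\<^sup>2" .
    moreover have "(norm ((x - m i) + (x - m j)))\<^sup>2 + (norm (m i - m j))\<^sup>2
        = 2 * (norm (x - m i))\<^sup>2 + 2 * (norm (x - m j))\<^sup>2"
      using parallelogram_law[of "x - m i" "x - m j"] by (simp add: norm_minus_commute)
    ultimately show ?thesis
      using m_less[of i] m_less[of j] by linarith
  qed
  have "Cauchy m"
  proof (rule CauchyI)
    fix e :: real assume "e > 0"
    obtain N :: nat where N: "4 / e\<^sup>2 < N"
      using reals_Archimedean2 by blast
    have "norm (m i - m j) < e" if "N \<le> i" "N \<le> j" for i j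
    proof -
      have "2 / Suc i \<le> 2 / Suc N" "2 / Suc j \<le> 2 / Suc N"
        using that by (auto simp: field_simps)
      then have "(norm (m i - m j))\<^sup>2 \<le> 4 / Suc N"
        using m_close[of i j] by simp
      also have "\<dots> < e\<^sup>2"
        using N \<open>e > 0\<close> by (simp add: field_simps) (smt (verit) zero_less_power)
      finally show ?thesis
        using \<open>e > 0\<close> by (simp add: power_less_imp_less_base)
    qed
    then show "\<exists>N. \<forall>i\<ge>N. \<forall>j\<ge>N. norm (m i - m j) < e"
      by blast
  qed
  then obtain p where p: "m \<longlonglongrightarrow> p"
    by (auto simp: Cauchy_convergent_iff convergent_def)
  have "p \<in> M"
    using closed_sequentially[OF _ m_in p] M by (simp add: closed_csubspace_def)
  have "(\<lambda>n. (norm (x - m n))\<^sup>2) \<longlonglongrightarrow> (norm (x - p))\<^sup>2"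
    by (intro tendsto_intros p)
  moreover have "(\<lambda>n. d + 1 / Suc n) \<longlonglongrightarrow> d + 0"
    by (intro tendsto_intros) (rule LIMSEQ_Suc[OF lim_inverse_n'])
  ultimately have p_min: "(norm (x - p))\<^sup>2 \<le> d"
    using m_less by (auto intro: LIMSEQ_le less_imp_le)
  have "norm (x - p) \<le> norm (x - q)" if "q \<in> M" for q
    using power2_le_imp_le[OF order_trans[OF p_min d_le[OF that]]] by simp
  with \<open>p \<in> M\<close> show ?thesis
    by blast
qed

lemma proj_char:
  fixes M :: "'a::complex_hilbert set"
  assumes M: "closed_csubspace M"
  shows proj_in: "proj M x \<in> M"
    and proj_orthogonal: "y \<in> M \<Longrightarrow> hinner (x - proj M x) y = 0"
proof -
  obtain p where p: "p \<in> M" "\<forall>m\<in>M. norm (x - p) \<le> norm (x - m)"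
    using closed_csubspace_best_approximation[OF M] by blast
  have "hinner (x - p) y = 0" if "y \<in> M" for y
  proof (rule orthogonal_if_norm_minimal)
    fix t
    have "p + hscale t y \<in> M"
      using M p(1) that by (simp add: closed_csubspace_def)
    then show "norm (x - p) \<le> norm (x - p - hscale t y)"
      using p(2) by (simp add: diff_diff_eq)
  qed
  moreover have "q = p" if "q \<in> M" "\<forall>y\<in>M. hinner (x - q) y = 0" for q
  proof -
    have "p - q \<in> M"
      using M p(1) that(1) by (rule closed_csubspace_diff)
    then have "hinner (x - q) (p - q) - hinner (x - p) (p - q) = 0"
      using calculation that(2) by simp
    then show ?thesis
      by (simp flip: hinner_diff_left add: hinner_self_eq_0)
  qed
  ultimately have "\<exists>!p. p \<in> M \<and> (\<forall>y\<in>M. hinner (x - p) y = 0)"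
    using p(1) by blast
  then have "proj M x \<in> M \<and> (\<forall>y\<in>M. hinner (x - proj M x) y = 0)"
    unfolding proj_def by (rule theI')
  then show "proj M x \<in> M" "y \<in> M \<Longrightarrow> hinner (x - proj M x) y = 0"
    by auto
qed

lemma proj_eqI:
  assumes M: "closed_csubspace M" and "p \<in> M" and orth: "\<And>y. y \<in> M \<Longrightarrow> hinner (x - p) y = 0"
  shows "proj M x = p"
proof -
  have "p - proj M x \<in> M"
    using M assms(2) proj_in[OF M] by (rule closed_csubspace_diff)
  then have "hinner (x - proj M x) (p - proj M x) - hinner (x - p) (p - proj M x) = 0"
    using orth proj_orthogonal[OF M] by simp
  then show ?thesis
    by (simp flip: hinner_diff_left add: hinner_self_eq_0)
qed

lemma proj_hinner_left: "closed_csubspace M \<Longrightarrow> y \<in> M \<Longrightarrow> hinner (proj M x) y = hinner x y"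
  using proj_orthogonal[of M y x] by (simp add: hinner_diff_left)

lemma proj_hinner_right: "closed_csubspace M \<Longrightarrow> x \<in> M \<Longrightarrow> hinner x (proj M y) = hinner x y"
  by (metis proj_hinner_left hinner_sym)

lemma bounded_op_proj:
  assumes M: "closed_csubspace M"
  shows "bounded_op (proj M)"
proof (rule bounded_opI[where K = 1])
  show "clinear_op (proj M)"
    unfolding clinear_op_def
  proof (intro conjI allI)
    fix x y
    show "proj M (x + y) = proj M x + proj M y"
    proof (rule proj_eqI[OF M])
      show "proj M x + proj M y \<in> M"
        using M proj_in[OF M] by (simp add: closed_csubspace_def)
      show "hinner (x + y - (proj M x + proj M y)) z = 0" if "z \<in> M" for z
      proof -
        have "x + y - (proj M x + proj M y) = (x - proj M x) + (y - proj M y)"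
          by simp
        then show ?thesis
          using proj_orthogonal[OF M that] by (simp only: hinner_add_left) simp
      qed
    qed
  next
    fix a x
    show "proj M (hscale a x) = hscale a (proj M x)"
    proof (rule proj_eqI[OF M])
      show "hscale a (proj M x) \<in> M"
        using M proj_in[OF M] by (simp add: closed_csubspace_def)
      show "hinner (hscale a x - hscale a (proj M x)) z = 0" if "z \<in> M" for z
        using proj_orthogonal[OF M that, of x] by (simp add: hinner_hscale_left flip: hscale_diff_right)
    qed
  qed
  fix x
  have "hinner (x - proj M x) (proj M x) = 0"
    by (rule proj_orthogonal[OF M proj_in[OF M]])
  then have "hinner x x = hinner (x - proj M x) (x - proj M x) + hinner (proj M x) (proj M x)"
    using hinner_sym[of "proj M x" "x - proj M x"] by (simp add: hinner_diff_left hinner_diff_right)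
  then have "(norm x)\<^sup>2 = (norm (x - proj M x))\<^sup>2 + (norm (proj M x))\<^sup>2"
    by (metis Re_hinner_self plus_complex.sel(1))
  then have "(norm (proj M x))\<^sup>2 \<le> (norm x)\<^sup>2"
    by simp
  then show "norm (proj M x) \<le> 1 * norm x"
    using power2_le_imp_le[of "norm (proj M x)" "norm x"] by simp
qed

lemma riesz_representation:
  fixes f :: "'a::complex_hilbert \<Rightarrow> complex"
  assumes add: "\<And>x y. f (x + y) = f x + f y" and scale: "\<And>a x. f (hscale a x) = a * f x"
    and bound: "\<And>x. cmod (f x) \<le> K * norm x"
  shows "\<exists>z. \<forall>x. f x = hinner x z"
proof (cases "\<forall>x. f x = 0")
  case True
  then show ?thesis
    by (auto intro: exI[of _ 0])
next
  case False
  then obtain u where u: "f u \<noteq> 0"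
    by blast
  have "bounded_linear f"
    by (rule bounded_linear_intro[where K = K])
      (auto simp: add bound mult.commute scaleR_conv_of_real simp flip: hscale_of_real scale)
  define N where "N = {x. f x = 0}"
  have f0: "f 0 = 0"
    using scale[of 0 0] by simp
  have N: "closed_csubspace N"
    unfolding closed_csubspace_def N_def
  proof (intro conjI ballI allI)
    show "closed {x. f x = 0}"
      using \<open>bounded_linear f\<close> by (intro closed_Collect_eq linear_continuous_on continuous_on_const)
  qed (auto simp: add scale f0)
  define w where "w = u - proj N u"
  have "f (proj N u) = 0"
    using proj_in[OF N] by (simp add: N_def)
  then have fw: "f w \<noteq> 0"
    unfolding w_def using add[of "u - proj N u" "proj N u"] u by simp
  then have ww: "hinner w w \<noteq> 0"
    using f0 by (auto simp: hinner_self_eq_0)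
  show ?thesis
  proof (intro exI allI)
    fix x
    define v where "v = x - hscale (f x / f w) w"
    have "f v = 0"
      unfolding v_def using add[of "x - hscale (f x / f w) w" "hscale (f x / f w) w"] scale fw
      by simp
    then have "hinner w v = 0"
      using proj_orthogonal[OF N, of v u] by (simp add: N_def w_def)
    then have "hinner v w = 0"
      by (metis hinner_sym complex_cnj_zero)
    then have "hinner x w = (f x / f w) * hinner w w"
      unfolding v_def by (simp add: hinner_diff_left hinner_hscale_left)
    then show "f x = hinner x (hscale (cnj (f w / hinner w w)) w)"
      using fw ww by (simp add: hinner_hscale_right)
  qed
qed

lemma adj_on_eqI:
  fixes A S :: "'a::complex_hilbert \<Rightarrow> 'a"
  assumes M: "closed_csubspace M" and S: "\<And>y. y \<in> M \<Longrightarrow> S y \<in> M"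
    and adjoint: "\<And>x y. x \<in> M \<Longrightarrow> y \<in> M \<Longrightarrow> hinner (A x) y = hinner x (S y)"
    and y: "y \<in> M"
  shows "adj_on M A y = S y"
proof -
  have "(THE z. z \<in> M \<and> (\<forall>x\<in>M. hinner (A x) y = hinner x z)) = S y"
  proof (rule the_equality)
    show "S y \<in> M \<and> (\<forall>x\<in>M. hinner (A x) y = hinner x (S y))"
      using S adjoint y by auto
    fix z assume z: "z \<in> M \<and> (\<forall>x\<in>M. hinner (A x) y = hinner x z)"
    have "z - S y \<in> M"
      using closed_csubspace_diff[OF M] z S y by auto
    then have "hinner (z - S y) (z - S y) = 0"
      using z adjoint[OF _ y] by (simp add: hinner_diff_right)
    then show "z = S y"
      by (simp add: hinner_self_eq_0)
  qed
  then show ?thesis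
    using y by (simp add: adj_on_def)
qed

lemma hinner_adj_right:
  assumes T: "bounded_op T"
  shows "hinner (T x) y = hinner x (adj T y)"
proof -
  obtain K where K: "K \<ge> 0" "\<And>x. norm (T x) \<le> K * norm x"
    using bounded_op_nonneg_bound[OF T] by blast
  have "\<exists>z. \<forall>x. hinner (T x) y = hinner x z" for y
  proof (rule riesz_representation[where K = "K * norm y"])
    show "hinner (T (x + x')) y = hinner (T x) y + hinner (T x') y" for x x'
      by (simp add: clinear_op_add[OF bounded_op_clinear_op[OF T]] hinner_add_left)
    show "hinner (T (hscale a x)) y = a * hinner (T x) y" for a x
      by (simp add: clinear_op_hscale[OF bounded_op_clinear_op[OF T]] hinner_hscale_left)
    show "cmod (hinner (T x) y) \<le> K * norm y * norm x" for x
      using hinner_cauchy_schwarz[of "T x" y] mult_right_mono[OF K(2)[of x] norm_ge_zero[of y]]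
      by (simp add: ac_simps)
  qed
  then obtain S where S: "\<And>x y. hinner (T x) y = hinner x (S y)"
    by (metis choice)
  have "adj T y = S y" for y
    by (rule adj_on_eqI[OF closed_csubspace_UNIV]) (simp_all add: S)
  then show ?thesis
    by (simp add: S)
qed

lemma hinner_adj_left: "bounded_op T \<Longrightarrow> hinner (adj T x) y = hinner x (T y)"
  by (metis hinner_adj_right hinner_sym)

lemma bounded_op_adj:
  assumes T: "bounded_op T"
  shows "bounded_op (adj T)"
proof -
  obtain K where K: "K \<ge> 0" "\<And>x. norm (T x) \<le> K * norm x"
    using bounded_op_nonneg_bound[OF T] by blast
  show ?thesis
  proof (rule bounded_opI[where K = K])
    show "clinear_op (adj T)"
      unfolding clinear_op_def
    proof (intro conjI allI; rule hinner_right_ext)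
      show "hinner z (adj T (x + y)) = hinner z (adj T x + adj T y)" for x y z
        by (simp add: hinner_add_right flip: hinner_adj_right[OF T])
      show "hinner z (adj T (hscale a x)) = hinner z (hscale a (adj T x))" for a x z
        by (simp add: hinner_hscale_right flip: hinner_adj_right[OF T])
    qed
    fix y
    have "(norm (adj T y))\<^sup>2 = Re (hinner (T (adj T y)) y)"
      by (simp add: hinner_adj_right[OF T] Re_hinner_self)
    also have "\<dots> \<le> norm (T (adj T y)) * norm y"
      using complex_Re_le_cmod hinner_cauchy_schwarz by (rule order_trans)
    also have "\<dots> \<le> K * norm (adj T y) * norm y"
      by (rule mult_right_mono[OF K(2)]) simp
    finally show "norm (adj T y) \<le> K * norm y"
      using K(1) by (cases "adj T y = 0") (auto simp: power2_eq_square mult_le_cancel_right ac_simps)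
  qed
qed

section \<open>Square roots of positive operators\<close>

lemma funpow_commute: "(\<And>x. G (C x) = C (G x)) \<Longrightarrow> G ((C ^^ k) x) = (C ^^ k) (G x)"
  by (induction k) auto

definition commutes :: "('a \<Rightarrow> 'a) \<Rightarrow> ('a \<Rightarrow> 'a) \<Rightarrow> bool" where
  "commutes G A \<longleftrightarrow> (\<forall>x. G (A x) = A (G x))"

text \<open>For \<open>0 \<le> C \<le> I\<close> the iteration \<open>Y\<^sub>0 = 0\<close>, \<open>Y\<^sub>n\<^sub>+\<^sub>1 = (C + Y\<^sub>n\<^sup>2) / 2\<close> increases to an operator \<open>Y\<close>
  with \<open>(I - Y)\<^sup>2 = I - C\<close>. Monotonicity holds because \<open>Y\<^sub>n\<close> and \<open>Y\<^sub>n\<^sub>+\<^sub>1 - Y\<^sub>n\<close> are polynomials in \<open>C\<close>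
  with nonnegative coefficients.\<close>
locale positive_contraction =
  fixes C :: "'a::complex_hilbert \<Rightarrow> 'a"
  assumes clinear: "clinear_op C"
    and nonneg: "op_nonneg_on UNIV C"
    and le_id: "\<And>x. Re (hinner (C x) x) \<le> (norm x)\<^sup>2"
begin

inductive_set nonneg_poly :: "('a \<Rightarrow> 'a) set" where
  monomial: "r \<ge> 0 \<Longrightarrow> (\<lambda>x. scaleR r ((C ^^ k) x)) \<in> nonneg_poly"
| add: "f \<in> nonneg_poly \<Longrightarrow> g \<in> nonneg_poly \<Longrightarrow> (\<lambda>x. f x + g x) \<in> nonneg_poly"

lemma nonneg_poly_cong: "f \<in> nonneg_poly \<Longrightarrow> (\<And>x. f x = g x) \<Longrightarrow> g \<in> nonneg_poly"
  by (subgoal_tac "f = g") auto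

lemma nonneg_poly_zero: "(\<lambda>x. 0) \<in> nonneg_poly"
  using monomial[of 0 0] by simp

lemma nonneg_poly_C: "C \<in> nonneg_poly"
  using monomial[of 1 1] by simp

lemma clinear_op_C_power: "clinear_op (C ^^ k)"
  by (rule clinear_op_funpow[OF clinear])

lemma nonneg_poly_clinear_op: "f \<in> nonneg_poly \<Longrightarrow> clinear_op f"
proof (induction rule: nonneg_poly.induct)
  case (monomial r k)
  then show ?case
    using clinear_op_C_power[of k] by (auto simp: clinear_op_def scaleR_add_right hscale_scaleR)
next
  case (add f g)
  then show ?case
    by (auto simp: clinear_op_def hscale_add_right)
qed

lemma nonneg_poly_scaleR: "f \<in> nonneg_poly \<Longrightarrow> r \<ge> 0 \<Longrightarrow> (\<lambda>x. scaleR r (f x)) \<in> nonneg_poly"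
proof (induction arbitrary: r rule: nonneg_poly.induct)
  case (monomial s k)
  then have "(\<lambda>x. scaleR (r * s) ((C ^^ k) x)) \<in> nonneg_poly"
    by (intro nonneg_poly.monomial) simp
  then show ?case
    by (rule nonneg_poly_cong) simp
next
  case (add f g)
  then have "(\<lambda>x. scaleR r (f x) + scaleR r (g x)) \<in> nonneg_poly"
    by (intro nonneg_poly.add) auto
  then show ?case
    by (rule nonneg_poly_cong) (simp add: scaleR_add_right)
qed

lemma nonneg_poly_comp: "f \<in> nonneg_poly \<Longrightarrow> g \<in> nonneg_poly \<Longrightarrow> (\<lambda>x. f (g x)) \<in> nonneg_poly"
proof (induction arbitrary: g rule: nonneg_poly.induct)
  case (monomial r k)
  from monomial.prems show ?case
  proof (induction rule: nonneg_poly.induct)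
    case (monomial s l)
    have "(\<lambda>x. scaleR (r * s) ((C ^^ (k + l)) x)) \<in> nonneg_poly"
      using \<open>r \<ge> 0\<close> \<open>s \<ge> 0\<close> by (intro nonneg_poly.monomial) simp
    then show ?case
      by (rule nonneg_poly_cong) (simp add: clinear_op_scaleR[OF clinear_op_C_power] funpow_add)
  next
    case (add g1 g2)
    then have "(\<lambda>x. scaleR r ((C ^^ k) (g1 x)) + scaleR r ((C ^^ k) (g2 x))) \<in> nonneg_poly"
      by (intro nonneg_poly.add)
    then show ?case
      by (rule nonneg_poly_cong) (simp add: clinear_op_add[OF clinear_op_C_power] scaleR_add_right)
  qed
next
  case (add f1 f2)
  then show ?case
    using nonneg_poly.add by blast
qed

lemma nonneg_poly_commute:
  assumes G: "clinear_op G" "\<And>x. G (C x) = C (G x)" and f: "f \<in> nonneg_poly"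
  shows "f (G x) = G (f x)"
  using f
proof (induction arbitrary: x rule: nonneg_poly.induct)
  case (monomial r k)
  then show ?case
    by (simp add: clinear_op_scaleR[OF G(1)] funpow_commute[where G = G and C = C, OF G(2)])
next
  case (add f g)
  then show ?case
    by (simp add: clinear_op_add[OF G(1)])
qed

lemma nonneg_poly_comm:
  assumes "f \<in> nonneg_poly" "g \<in> nonneg_poly"
  shows "f (g x) = g (f x)"
proof (rule nonneg_poly_commute[OF nonneg_poly_clinear_op[OF assms(2)] _ assms(1)])
  show "g (C y) = C (g y)" for y
    by (rule nonneg_poly_commute[OF clinear _ assms(2)]) simp
qed

lemma C_power_selfadjoint: "hinner ((C ^^ k) x) y = hinner x ((C ^^ k) y)"
proof (induction k arbitrary: y)
  case (Suc k)
  have "hinner ((C ^^ Suc k) x) y = hinner ((C ^^ k) x) (C y)"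
    by (simp add: op_nonneg_selfadjoint[OF clinear nonneg])
  also have "\<dots> = hinner x ((C ^^ Suc k) y)"
    by (simp add: Suc funpow_swap1)
  finally show ?case .
qed simp

lemma nonneg_poly_selfadjoint: "f \<in> nonneg_poly \<Longrightarrow> hinner (f x) y = hinner x (f y)"
  by (induction arbitrary: x y rule: nonneg_poly.induct)
    (simp_all add: hinner_scaleR_left hinner_scaleR_right hinner_add_left hinner_add_right
      C_power_selfadjoint)

lemma C_power_nonneg: "hinner ((C ^^ k) x) x \<ge> 0"
proof -
  obtain j where "k = 2 * j \<or> k = 2 * j + 1"
    by (metis mult_div_mod_eq[of 2 k] mod2_eq_if add.commute add_0)
  then show ?thesis
  proof
    assume "k = 2 * j"
    then have "hinner ((C ^^ k) x) x = hinner ((C ^^ j) x) ((C ^^ j) x)"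
      by (simp add: mult_2 funpow_add C_power_selfadjoint)
    then show ?thesis
      by (simp add: hinner_self_nonneg)
  next
    assume "k = 2 * j + 1"
    then have "hinner ((C ^^ k) x) x = hinner (C ((C ^^ j) x)) ((C ^^ j) x)"
      by (simp add: mult_2 funpow_add funpow_swap1 C_power_selfadjoint)
    then show ?thesis
      using nonneg by (simp add: op_nonneg_on_def)
  qed
qed

lemma nonneg_poly_nonneg: "f \<in> nonneg_poly \<Longrightarrow> op_nonneg_on UNIV f"
  unfolding op_nonneg_on_def
proof (induction rule: nonneg_poly.induct)
  case (monomial r k)
  then show ?case
    using C_power_nonneg[of k]
    by (simp add: hinner_scaleR_left less_eq_complex_def)
next
  case (add f g)
  then show ?case
    by (simp add: hinner_add_left)
qed

fun sqrt_iter :: "nat \<Rightarrow> 'a \<Rightarrow> 'a" where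
  "sqrt_iter 0 = (\<lambda>x. 0)"
| "sqrt_iter (Suc n) = (\<lambda>x. scaleR (1/2) (C x + sqrt_iter n (sqrt_iter n x)))"

lemma sqrt_iter_Suc: "sqrt_iter (Suc n) x = scaleR (1/2) (C x + sqrt_iter n (sqrt_iter n x))"
  by simp

declare sqrt_iter.simps(2) [simp del]

lemma sqrt_iter_nonneg_poly: "sqrt_iter n \<in> nonneg_poly"
proof (induction n)
  case 0
  then show ?case
    by (simp add: nonneg_poly_zero)
next
  case (Suc n)
  have "(\<lambda>x. C x + sqrt_iter n (sqrt_iter n x)) \<in> nonneg_poly"
    by (rule add[OF nonneg_poly_C nonneg_poly_comp[OF Suc Suc]])
  then have "(\<lambda>x. scaleR (1/2) (C x + sqrt_iter n (sqrt_iter n x))) \<in> nonneg_poly"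
    by (rule nonneg_poly_scaleR) simp
  then show ?case
    by (rule nonneg_poly_cong) (simp add: sqrt_iter_Suc)
qed

lemma sqrt_iter_clinear_op: "clinear_op (sqrt_iter n)"
  by (rule nonneg_poly_clinear_op[OF sqrt_iter_nonneg_poly])

lemma sqrt_iter_step_nonneg_poly: "(\<lambda>x. sqrt_iter (Suc n) x - sqrt_iter n x) \<in> nonneg_poly"
proof (induction n)
  case 0
  have "(\<lambda>x. scaleR (1/2) (C x)) \<in> nonneg_poly"
    by (rule nonneg_poly_scaleR[OF nonneg_poly_C]) simp
  then show ?case
    by (rule nonneg_poly_cong) (simp add: sqrt_iter_Suc)
next
  case (Suc n)
  let ?Y = sqrt_iter
  text \<open>\<open>Y\<^sub>n\<^sub>+\<^sub>2 - Y\<^sub>n\<^sub>+\<^sub>1 = (Y\<^sub>n\<^sub>+\<^sub>1 - Y\<^sub>n) (Y\<^sub>n\<^sub>+\<^sub>1 + Y\<^sub>n) / 2\<close>, as the \<open>Y\<^sub>n\<close> commute.\<close>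
  have "(\<lambda>x. ?Y (Suc n) x + ?Y n x) \<in> nonneg_poly"
    by (rule add[OF sqrt_iter_nonneg_poly sqrt_iter_nonneg_poly])
  then have "(\<lambda>x. scaleR (1/2) ((\<lambda>x. ?Y (Suc n) x - ?Y n x) (?Y (Suc n) x + ?Y n x))) \<in> nonneg_poly"
    by (intro nonneg_poly_scaleR nonneg_poly_comp[OF Suc]) simp_all
  then show ?case
  proof (rule nonneg_poly_cong)
    fix x
    have "?Y (Suc n) (?Y (Suc n) x + ?Y n x) - ?Y n (?Y (Suc n) x + ?Y n x)
        = ?Y (Suc n) (?Y (Suc n) x) - ?Y n (?Y n x)"
      using nonneg_poly_comm[OF sqrt_iter_nonneg_poly sqrt_iter_nonneg_poly, of n "Suc n" x]
      by (simp add: clinear_op_add[OF sqrt_iter_clinear_op])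
    then show "scaleR (1/2) ((\<lambda>x. ?Y (Suc n) x - ?Y n x) (?Y (Suc n) x + ?Y n x))
        = ?Y (Suc (Suc n)) x - ?Y (Suc n) x"
      by (simp only: sqrt_iter_Suc[of "Suc n"] sqrt_iter_Suc[of n]) (simp add: algebra_simps)
  qed
qed

lemma sqrt_iter_le_id: "Re (hinner (sqrt_iter n x) x) \<le> (norm x)\<^sup>2"
proof (induction n arbitrary: x)
  case (Suc n)
  have "norm (sqrt_iter n x) \<le> norm x"
    by (rule norm_le_if_op_nonneg_le_id[OF sqrt_iter_clinear_op
          nonneg_poly_nonneg[OF sqrt_iter_nonneg_poly] Suc])
  moreover have "hinner (sqrt_iter n (sqrt_iter n x)) x = hinner (sqrt_iter n x) (sqrt_iter n x)"
    by (rule nonneg_poly_selfadjoint[OF sqrt_iter_nonneg_poly])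
  ultimately have "Re (hinner (sqrt_iter n (sqrt_iter n x)) x) \<le> (norm x)\<^sup>2"
    by (simp add: Re_hinner_self power_mono)
  then show ?case
    using le_id[of x] by (simp add: sqrt_iter_Suc hinner_scaleR_left hinner_add_left)
qed simp

lemma norm_sqrt_iter_le: "norm (sqrt_iter n x) \<le> norm x"
  by (rule norm_le_if_op_nonneg_le_id[OF sqrt_iter_clinear_op
        nonneg_poly_nonneg[OF sqrt_iter_nonneg_poly] sqrt_iter_le_id])

lemma sqrt_iter_dist_le:
  assumes "n \<le> m"
  shows "(norm (sqrt_iter m x - sqrt_iter n x))\<^sup>2
    \<le> Re (hinner (sqrt_iter m x) x) - Re (hinner (sqrt_iter n x) x)"
proof -
  have "(\<lambda>x. sqrt_iter k x - sqrt_iter n x) \<in> nonneg_poly" if "n \<le> k" for k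
    using that
  proof (induction k rule: dec_induct)
    case base
    then show ?case
      by (simp add: nonneg_poly_zero)
  next
    case (step k)
    have "(\<lambda>x. (sqrt_iter (Suc k) x - sqrt_iter k x) + (sqrt_iter k x - sqrt_iter n x))
        \<in> nonneg_poly"
      by (rule add[OF sqrt_iter_step_nonneg_poly step.IH])
    then show ?case
      by (rule nonneg_poly_cong) simp
  qed
  define E where "E = (\<lambda>x. sqrt_iter m x - sqrt_iter n x)"
  have "E \<in> nonneg_poly"
    using assms by (simp add: E_def \<open>\<And>k. n \<le> k \<Longrightarrow> _\<close>)
  have "Re (hinner (E z) z) \<le> (norm z)\<^sup>2" for z
  proof -
    have "0 \<le> Re (hinner (sqrt_iter n z) z)"
      using nonneg_poly_nonneg[OF sqrt_iter_nonneg_poly, of n]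
      by (simp add: op_nonneg_on_def less_eq_complex_def)
    then show ?thesis
      using sqrt_iter_le_id[of m z] by (simp add: E_def hinner_diff_left)
  qed
  then have "(norm (E x))\<^sup>2 \<le> Re (hinner (E x) x)"
    by (rule norm_sq_le_form_if_op_nonneg_le_id[OF nonneg_poly_clinear_op[OF \<open>E \<in> nonneg_poly\<close>]
          nonneg_poly_nonneg[OF \<open>E \<in> nonneg_poly\<close>]])
  then show ?thesis
    by (simp add: E_def hinner_diff_left)
qed

lemma Cauchy_sqrt_iter: "Cauchy (\<lambda>n. sqrt_iter n x)"
proof -
  define q where "q n = Re (hinner (sqrt_iter n x) x)" for n
  have "incseq q"
  proof (rule incseq_SucI)
    fix n
    have "0 \<le> (norm (sqrt_iter (Suc n) x - sqrt_iter n x))\<^sup>2"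
      by simp
    also have "\<dots> \<le> q (Suc n) - q n"
      using sqrt_iter_dist_le[of n "Suc n" x] by (simp add: q_def)
    finally show "q n \<le> q (Suc n)"
      by simp
  qed
  moreover have "\<forall>n. q n \<le> (norm x)\<^sup>2"
    by (simp add: q_def sqrt_iter_le_id)
  ultimately obtain L where "q \<longlonglongrightarrow> L"
    using incseq_convergent by blast
  then have "Cauchy q"
    by (intro convergent_Cauchy) (auto simp: convergent_def)
  show ?thesis
  proof (rule CauchyI)
    fix e :: real assume "e > 0"
    then obtain N where N: "\<And>m n. m \<ge> N \<Longrightarrow> n \<ge> N \<Longrightarrow> norm (q m - q n) < e\<^sup>2"
      using \<open>Cauchy q\<close> unfolding Cauchy_iff by (meson zero_less_power)
    have ordered: "(norm (sqrt_iter m x - sqrt_iter n x))\<^sup>2 < e\<^sup>2"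
      if "m \<ge> N" "n \<ge> N" "n \<le> m" for m n
      using sqrt_iter_dist_le[OF that(3), of x] N[OF that(1,2)] by (simp add: q_def)
    have squared: "(norm (sqrt_iter m x - sqrt_iter n x))\<^sup>2 < e\<^sup>2" if "m \<ge> N" "n \<ge> N" for m n
      using ordered[OF that] ordered[OF that(2,1)] by (cases "n \<le> m") (simp_all add: norm_minus_commute)
    have "norm (sqrt_iter m x - sqrt_iter n x) < e" if "m \<ge> N" "n \<ge> N" for m n
      by (rule power_less_imp_less_base[OF squared[OF that]]) (use \<open>e > 0\<close> in simp)
    then show "\<exists>N. \<forall>m\<ge>N. \<forall>n\<ge>N. norm (sqrt_iter m x - sqrt_iter n x) < e"
      by blast
  qed
qed

definition sqrt_lim :: "'a \<Rightarrow> 'a" where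
  "sqrt_lim x = lim (\<lambda>n. sqrt_iter n x)"

lemma sqrt_iter_tendsto: "(\<lambda>n. sqrt_iter n x) \<longlonglongrightarrow> sqrt_lim x"
  unfolding sqrt_lim_def using Cauchy_sqrt_iter[of x]
  by (simp add: Cauchy_convergent_iff convergent_LIMSEQ_iff)

lemma sqrt_lim_clinear_op: "clinear_op sqrt_lim"
  unfolding clinear_op_def
proof (intro conjI allI)
  fix x y
  have "(\<lambda>n. sqrt_iter n (x + y)) \<longlonglongrightarrow> sqrt_lim x + sqrt_lim y"
    using tendsto_add[OF sqrt_iter_tendsto[of x] sqrt_iter_tendsto[of y]]
    by (simp add: clinear_op_add[OF sqrt_iter_clinear_op])
  then show "sqrt_lim (x + y) = sqrt_lim x + sqrt_lim y"
    using sqrt_iter_tendsto LIMSEQ_unique by blast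
next
  fix a x
  have "(\<lambda>n. sqrt_iter n (hscale a x)) \<longlonglongrightarrow> hscale a (sqrt_lim x)"
    using bounded_linear.tendsto[OF bounded_linear_hscale sqrt_iter_tendsto[of x]]
    by (simp add: clinear_op_hscale[OF sqrt_iter_clinear_op])
  then show "sqrt_lim (hscale a x) = hscale a (sqrt_lim x)"
    using sqrt_iter_tendsto LIMSEQ_unique by blast
qed

lemma norm_sqrt_lim_le: "norm (sqrt_lim x) \<le> norm x"
  by (rule LIMSEQ_le_const2[OF tendsto_norm[OF sqrt_iter_tendsto]]) (use norm_sqrt_iter_le in blast)

lemma sqrt_lim_form:
  shows "Im (hinner (sqrt_lim x) x) = 0" and "Re (hinner (sqrt_lim x) x) \<le> (norm x)\<^sup>2"
proof -
  have "(\<lambda>n. hinner (sqrt_iter n x) x) \<longlonglongrightarrow> hinner (sqrt_lim x) x"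
    by (intro tendsto_intros sqrt_iter_tendsto)
  then have Re: "(\<lambda>n. Re (hinner (sqrt_iter n x) x)) \<longlonglongrightarrow> Re (hinner (sqrt_lim x) x)"
    and Im: "(\<lambda>n. Im (hinner (sqrt_iter n x) x)) \<longlonglongrightarrow> Im (hinner (sqrt_lim x) x)"
    by (auto intro: tendsto_Re tendsto_Im)
  show "Re (hinner (sqrt_lim x) x) \<le> (norm x)\<^sup>2"
    by (rule LIMSEQ_le_const2[OF Re]) (use sqrt_iter_le_id in blast)
  have "Im (hinner (sqrt_iter n x) x) = 0" for n
    using nonneg_poly_nonneg[OF sqrt_iter_nonneg_poly, of n]
    by (simp add: op_nonneg_on_def less_eq_complex_def)
  with Im show "Im (hinner (sqrt_lim x) x) = 0"
    by (simp add: LIMSEQ_const_iff)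
qed

lemma sqrt_lim_fixpoint: "sqrt_lim x = scaleR (1/2) (C x + sqrt_lim (sqrt_lim x))"
proof -
  have "(\<lambda>n. sqrt_iter n (sqrt_iter n x - sqrt_lim x)) \<longlonglongrightarrow> 0"
  proof (rule tendsto_norm_zero_cancel)
    have "(\<lambda>n. norm (sqrt_iter n x - sqrt_lim x)) \<longlonglongrightarrow> 0"
      using sqrt_iter_tendsto[of x] by (simp add: LIM_zero tendsto_norm_zero)
    then show "(\<lambda>n. norm (sqrt_iter n (sqrt_iter n x - sqrt_lim x))) \<longlonglongrightarrow> 0"
      by (rule Lim_null_comparison[rotated]) (simp add: norm_sqrt_iter_le)
  qed
  then have "(\<lambda>n. sqrt_iter n (sqrt_iter n x - sqrt_lim x) + sqrt_iter n (sqrt_lim x))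
      \<longlonglongrightarrow> 0 + sqrt_lim (sqrt_lim x)"
    by (intro tendsto_add sqrt_iter_tendsto)
  then have squares: "(\<lambda>n. sqrt_iter n (sqrt_iter n x)) \<longlonglongrightarrow> sqrt_lim (sqrt_lim x)"
    by (simp add: clinear_op_diff[OF sqrt_iter_clinear_op])
  have "(\<lambda>n. sqrt_iter (Suc n) x) \<longlonglongrightarrow> scaleR (1/2) (C x + sqrt_lim (sqrt_lim x))"
    unfolding sqrt_iter_Suc by (intro tendsto_intros squares)
  moreover have "(\<lambda>n. sqrt_iter (Suc n) x) \<longlonglongrightarrow> sqrt_lim x"
    by (rule LIMSEQ_Suc[OF sqrt_iter_tendsto])
  ultimately show ?thesis
    using LIMSEQ_unique by blast
qed

lemma sqrt_lim_commute:
  assumes G: "bounded_op G" "commutes G C"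
  shows "G (sqrt_lim x) = sqrt_lim (G x)"
proof -
  have "(\<lambda>n. G (sqrt_iter n x)) \<longlonglongrightarrow> G (sqrt_lim x)"
    by (rule bounded_linear.tendsto[OF bounded_op_bounded_linear[OF G(1)] sqrt_iter_tendsto])
  moreover have "G (sqrt_iter n x) = sqrt_iter n (G x)" for n
    using nonneg_poly_commute[OF bounded_op_clinear_op[OF G(1)] _ sqrt_iter_nonneg_poly] G(2)
    by (simp add: commutes_def)
  ultimately have "(\<lambda>n. sqrt_iter n (G x)) \<longlonglongrightarrow> G (sqrt_lim x)"
    by simp
  then show ?thesis
    using sqrt_iter_tendsto LIMSEQ_unique by blast
qed

end

lemma (in positive_contraction) sqrt_id_minus_exists:
  "\<exists>R. bounded_op R \<and> op_nonneg_on UNIV R \<and> (\<forall>x. R (R x) = x - C x) \<and>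
     (\<forall>G. bounded_op G \<longrightarrow> commutes G C \<longrightarrow> commutes G R)"
proof (intro exI conjI allI impI)
  define R where "R x = x - sqrt_lim x" for x
  have R_clinear: "clinear_op R"
    using sqrt_lim_clinear_op by (simp add: clinear_op_def R_def hscale_diff_right algebra_simps)
  show "bounded_op R"
  proof (rule bounded_opI[OF R_clinear, where K = 2])
    fix x
    have "norm (R x) \<le> norm x + norm (sqrt_lim x)"
      unfolding R_def by (rule norm_triangle_ineq4)
    then show "norm (R x) \<le> 2 * norm x"
      using norm_sqrt_lim_le[of x] by simp
  qed
  show "op_nonneg_on UNIV R"
    using sqrt_lim_form
    by (simp add: op_nonneg_on_def R_def hinner_diff_left less_eq_complex_def Re_hinner_self
        Im_hinner_self)
  show "R (R x) = x - C x" for x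
  proof -
    have "sqrt_lim (sqrt_lim x) = scaleR 2 (sqrt_lim x) - C x"
      using sqrt_lim_fixpoint[of x] by (simp add: algebra_simps scaleR_2) (metis scaleR_2
          scaleR_add_right scaleR_half_double add_diff_cancel_left')
    then show ?thesis
      by (simp add: R_def clinear_op_diff[OF sqrt_lim_clinear_op] algebra_simps scaleR_2)
  qed
  fix G assume G: "bounded_op G" "commutes G C"
  then have "G (sqrt_lim x) = sqrt_lim (G x)" for x
    by (rule sqrt_lim_commute)
  then show "commutes G R"
    by (simp add: commutes_def R_def clinear_op_diff[OF bounded_op_clinear_op[OF G(1)]])
qed

text \<open>Rescaling \<open>A\<close> by \<open>L > \<parallel>A\<parallel>\<close> makes \<open>I - A / L\<close> a positive contraction.\<close>
lemma op_nonneg_sqrt_exists: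
  fixes A :: "'a::complex_hilbert \<Rightarrow> 'a"
  assumes A: "bounded_op A" "op_nonneg_on UNIV A"
  shows "\<exists>R. bounded_op R \<and> op_nonneg_on UNIV R \<and> (\<forall>x. R (R x) = A x) \<and>
           (\<forall>G. bounded_op G \<longrightarrow> commutes G A \<longrightarrow> commutes G R)"
proof -
  have A_clinear: "clinear_op A"
    by (rule bounded_op_clinear_op[OF A(1)])
  obtain K where K: "K \<ge> 0" "\<And>x. norm (A x) \<le> K * norm x"
    using bounded_op_nonneg_bound[OF A(1)] by blast
  define L where "L = K + 1"
  have "L > 0"
    using K(1) by (simp add: L_def)
  define C where "C x = x - scaleR (1/L) (A x)" for x
  have A_form: "Re (hinner (A x) x) \<ge> 0" "Im (hinner (A x) x) = 0" for x
    using A(2) by (auto simp: op_nonneg_on_def less_eq_complex_def)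
  have A_le: "Re (hinner (A x) x) \<le> L * (norm x)\<^sup>2" for x
  proof -
    have "Re (hinner (A x) x) \<le> norm (A x) * norm x"
      using complex_Re_le_cmod hinner_cauchy_schwarz by (rule order_trans)
    also have "\<dots> \<le> K * norm x * norm x"
      by (rule mult_right_mono[OF K(2)]) simp
    also have "\<dots> \<le> L * (norm x)\<^sup>2"
      by (simp add: L_def power2_eq_square ring_distribs)
    finally show ?thesis .
  qed
  have C_form: "hinner (C x) x = of_real ((norm x)\<^sup>2 - (1/L) * Re (hinner (A x) x))" for x
    using A_form[of x] by (simp add: C_def hinner_diff_left hinner_scaleR_left hinner_norm complex_eq_iff)
  interpret positive_contraction C
  proof
    show "clinear_op C"
      using A_clinear
      by (simp add: clinear_op_def C_def hscale_add_right hscale_diff_right hscale_scaleR algebra_simps)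
    show "op_nonneg_on UNIV C"
      using A_le \<open>L > 0\<close> by (simp add: op_nonneg_on_def C_form less_eq_complex_def field_simps)
    show "Re (hinner (C x) x) \<le> (norm x)\<^sup>2" for x
      using A_form(1)[of x] \<open>L > 0\<close> by (simp add: C_form)
  qed
  obtain R where R: "bounded_op R" "op_nonneg_on UNIV R" "\<And>x. R (R x) = x - C x"
    and R_commutes: "\<And>G. bounded_op G \<Longrightarrow> commutes G C \<Longrightarrow> commutes G R"
    using sqrt_id_minus_exists by blast
  have R_clinear: "clinear_op R"
    by (rule bounded_op_clinear_op[OF R(1)])
  show ?thesis
  proof (intro exI conjI allI impI)
    show "scaleR (sqrt L) (R (scaleR (sqrt L) (R x))) = A x" for x
      using \<open>L > 0\<close> by (simp add: clinear_op_scaleR[OF R_clinear] R(3) C_def)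
    obtain K' where K': "\<And>x. norm (R x) \<le> K' * norm x"
      using R(1) by (auto simp: bounded_op_def)
    show "bounded_op (\<lambda>x. scaleR (sqrt L) (R x))"
    proof (rule bounded_opI[where K = "sqrt L * K'"])
      show "clinear_op (\<lambda>x. scaleR (sqrt L) (R x))"
        using R_clinear by (simp add: clinear_op_def scaleR_add_right hscale_scaleR)
      show "norm (scaleR (sqrt L) (R x)) \<le> sqrt L * K' * norm x" for x
        using K'[of x] \<open>L > 0\<close> by (simp add: mult.assoc mult_left_mono)
    qed
    show "op_nonneg_on UNIV (\<lambda>x. scaleR (sqrt L) (R x))"
      using R(2) \<open>L > 0\<close> by (simp add: op_nonneg_on_def hinner_scaleR_left less_eq_complex_def)
    fix G assume G: "bounded_op G" "commutes G A"
    then have "commutes G C"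
      using bounded_op_clinear_op[OF G(1)]
      by (simp add: commutes_def C_def clinear_op_diff clinear_op_scaleR)
    then show "commutes G (\<lambda>x. scaleR (sqrt L) (R x))"
      using R_commutes[OF G(1)] bounded_op_clinear_op[OF G(1)]
      by (simp add: commutes_def clinear_op_scaleR)
  qed
qed

lemma op_nonneg_sqrt_unique:
  fixes A R B :: "'a::complex_hilbert \<Rightarrow> 'a"
  assumes R: "bounded_op R" "op_nonneg_on UNIV R" "\<And>x. R (R x) = A x"
    and R_commutes: "\<And>G. bounded_op G \<Longrightarrow> commutes G A \<Longrightarrow> commutes G R"
    and B: "bounded_op B" "op_nonneg_on UNIV B" "\<And>x. B (B x) = A x"
  shows "B = R"
proof
  fix x
  have B_clinear: "clinear_op B" and R_clinear: "clinear_op R"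
    using B(1) R(1) by (auto simp: bounded_op_clinear_op)
  have "commutes B A"
    by (simp add: commutes_def flip: B(3))
  then have BR: "B (R y) = R (B y)" for y
    using R_commutes[OF B(1)] by (simp add: commutes_def)
  text \<open>For \<open>w = B x - R x\<close>, \<open>(B + R) w = B\<^sup>2 x - R\<^sup>2 x = 0\<close>, and both forms are nonnegative.\<close>
  define w where "w = B x - R x"
  have "B w + R w = 0"
    unfolding w_def clinear_op_diff[OF B_clinear] clinear_op_diff[OF R_clinear] B(3) R(3) BR
    by simp
  then have "hinner (B w) w + hinner (R w) w = 0"
    by (simp flip: hinner_add_left)
  moreover have "Re (hinner (B w) w) \<ge> 0" "Re (hinner (R w) w) \<ge> 0"
    using B(2) R(2) by (auto simp: op_nonneg_on_def less_eq_complex_def)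
  ultimately have "Re (hinner (B w) w) = 0" "Re (hinner (R w) w) = 0"
    by (metis add_nonneg_eq_0_iff plus_complex.sel(1) zero_complex.sel(1))+
  then have "B w = 0" "R w = 0"
    using op_nonneg_form_eq_0_imp_eq_0[OF B_clinear B(2)]
      op_nonneg_form_eq_0_imp_eq_0[OF R_clinear R(2)] by auto
  then have "hinner w w = 0"
    unfolding w_def hinner_diff_left op_nonneg_selfadjoint[OF B_clinear B(2)]
      op_nonneg_selfadjoint[OF R_clinear R(2)]
    by (simp flip: w_def)
  then show "B x = R x"
    by (simp add: hinner_self_eq_0 w_def)
qed

lemma op_sqrt:
  fixes A :: "'a::complex_hilbert \<Rightarrow> 'a"
  assumes "bounded_op A" "op_nonneg_on UNIV A"
  shows bounded_op_op_sqrt: "bounded_op (op_sqrt A)"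
    and op_nonneg_op_sqrt: "op_nonneg_on UNIV (op_sqrt A)"
    and op_sqrt_op_sqrt: "op_sqrt A (op_sqrt A x) = A x"
proof -
  obtain R where R: "bounded_op R" "op_nonneg_on UNIV R" "\<And>x. R (R x) = A x"
    "\<And>G. bounded_op G \<Longrightarrow> commutes G A \<Longrightarrow> commutes G R"
    using op_nonneg_sqrt_exists[OF assms] by blast
  have "\<exists>!B. bounded_op B \<and> op_nonneg_on UNIV B \<and> (\<forall>x. B (B x) = A x)"
    using R op_nonneg_sqrt_unique[OF R] by blast
  then have "bounded_op (op_sqrt A) \<and> op_nonneg_on UNIV (op_sqrt A) \<and> (\<forall>x. op_sqrt A (op_sqrt A x) = A x)"
    unfolding op_sqrt_def by (rule theI')
  then show "bounded_op (op_sqrt A)" "op_nonneg_on UNIV (op_sqrt A)" "op_sqrt A (op_sqrt A x) = A x"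
    by auto
qed

section \<open>The quadratic forms of \<open>B\<^sub>n\<close> and compressions\<close>

definition hyper_form :: "('a::complex_hilbert \<Rightarrow> 'a) \<Rightarrow> nat \<Rightarrow> 'a \<Rightarrow> real" where
  "hyper_form A n x = (\<Sum>j\<le>n. (-1) ^ j * real (n choose j) * (norm ((A ^^ j) x))\<^sup>2)"

lemma funpow_in: "(\<And>u. u \<in> M \<Longrightarrow> A u \<in> M) \<Longrightarrow> u \<in> M \<Longrightarrow> (A ^^ j) u \<in> M"
  by (induction j) auto

lemma hinner_funpow_adjoint:
  fixes A A' :: "'a::complex_hilbert \<Rightarrow> 'a"
  assumes A: "\<And>u. u \<in> M \<Longrightarrow> A u \<in> M" and A': "\<And>u. u \<in> M \<Longrightarrow> A' u \<in> M"
    and adjoint: "\<And>u w. u \<in> M \<Longrightarrow> w \<in> M \<Longrightarrow> hinner (A' u) w = hinner u (A w)"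
    and "u \<in> M" "v \<in> M"
  shows "hinner ((A' ^^ j) u) v = hinner u ((A ^^ j) v)"
  using \<open>u \<in> M\<close>
proof (induction j arbitrary: u)
  case (Suc j)
  have "hinner ((A' ^^ Suc j) u) v = hinner ((A' ^^ j) (A' u)) v"
    by (simp add: funpow_swap1)
  also have "\<dots> = hinner (A' u) ((A ^^ j) v)"
    using Suc.IH A' Suc.prems by blast
  also have "\<dots> = hinner u ((A ^^ Suc j) v)"
    using adjoint Suc.prems funpow_in[OF A \<open>v \<in> M\<close>] by simp
  finally show ?case .
qed simp

lemma hinner_Bop_self:
  fixes A :: "'a::complex_hilbert \<Rightarrow> 'a"
  assumes A: "\<And>u. u \<in> M \<Longrightarrow> A u \<in> M" and adj_in: "\<And>u. u \<in> M \<Longrightarrow> adj_on M A u \<in> M"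
    and adjoint: "\<And>u w. u \<in> M \<Longrightarrow> w \<in> M \<Longrightarrow> hinner (adj_on M A u) w = hinner u (A w)"
    and "y \<in> M"
  shows "hinner (Bop M A n y) y = of_real (hyper_form A n y)"
proof -
  have "hinner ((adj_on M A ^^ j) ((A ^^ j) y)) y = of_real ((norm ((A ^^ j) y))\<^sup>2)" for j
    using hinner_funpow_adjoint[OF A adj_in adjoint funpow_in[OF A \<open>y \<in> M\<close>] \<open>y \<in> M\<close>]
    by (simp add: hinner_norm)
  then show ?thesis
    by (simp add: Bop_def hyper_form_def hinner_sum_left hinner_hscale_left)
qed

lemma m_hyperexpansive_iff_hyper_form:
  assumes "bounded_op T"
  shows "m_hyperexpansive m T \<longleftrightarrow> (\<forall>n. 1 \<le> n \<and> n \<le> m \<longrightarrow> (\<forall>x. hyper_form T n x \<le> 0))"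
proof -
  have "hinner (Bop UNIV T n x) x = of_real (hyper_form T n x)" for n x
    by (rule hinner_Bop_self) (simp_all add: hinner_adj_left[OF assms])
  then show ?thesis
    by (simp add: m_hyperexpansive_def op_nonpos_on_def complex_of_real_nonpos_iff)
qed

lemma alternating_binomial_sum_Suc:
  fixes a :: "nat \<Rightarrow> real"
  shows "(\<Sum>j\<le>Suc n. (-1) ^ j * real (Suc n choose j) * a j)
    = - (\<Sum>j\<le>n. (-1) ^ j * real (n choose j) * (a (Suc j) - a j))"
proof -
  define f where "f j = (-1) ^ j * real (n choose j) * a j" for j
  have shift: "(\<Sum>j\<le>n. f (Suc j)) = (\<Sum>j\<le>n. f j) - f 0"
  proof -
    have "(\<Sum>j\<le>Suc n. f j) = (\<Sum>j\<le>n. f (Suc j)) + f 0"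
      by (rule sum.atMost_Suc_shift[THEN trans]) simp
    moreover have "(\<Sum>j\<le>Suc n. f j) = (\<Sum>j\<le>n. f j)"
      by (simp add: f_def)
    ultimately show ?thesis
      by simp
  qed
  have "(\<Sum>j\<le>Suc n. (-1) ^ j * real (Suc n choose j) * a j)
      = a 0 + (\<Sum>j\<le>n. (-1) ^ Suc j * real (Suc n choose Suc j) * a (Suc j))"
    by (subst sum.atMost_Suc_shift) simp
  also have "\<dots> = a 0 + (\<Sum>j\<le>n. - ((-1) ^ j * real (n choose j) * a (Suc j)) + f (Suc j))"
    by (simp add: f_def algebra_simps)
  also have "\<dots> = a 0 - (\<Sum>j\<le>n. (-1) ^ j * real (n choose j) * a (Suc j)) + (\<Sum>j\<le>n. f (Suc j))"
    by (simp add: sum.distrib sum_negf sum_subtractf)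
  also have "\<dots> = - (\<Sum>j\<le>n. (-1) ^ j * real (n choose j) * (a (Suc j) - a j))"
    unfolding shift by (simp add: f_def algebra_simps sum_subtractf)
  finally show ?thesis .
qed

lemma compression_in: "closed_csubspace M \<Longrightarrow> compression M T x \<in> M"
  by (simp add: compression_def proj_in closed_csubspace_def)

lemma adj_on_compression:
  assumes T: "bounded_op T" and M: "closed_csubspace M" and "y \<in> M"
  shows "adj_on M (compression M T) y = proj M (adj T y)"
proof (rule adj_on_eqI[OF M _ _ \<open>y \<in> M\<close>])
  show "proj M (adj T u) \<in> M" for u
    by (rule proj_in[OF M])
  show "hinner (compression M T x) y = hinner x (proj M (adj T y))" if "x \<in> M" "y \<in> M" for x y
    using that by (simp add: compression_def proj_hinner_left[OF M] proj_hinner_right[OF M]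
        hinner_adj_right[OF T])
qed

lemma m_hypercontraction_on_compression_iff_hyper_form:
  assumes T: "bounded_op T" and M: "closed_csubspace M"
  shows "m_hypercontraction_on M m (compression M T)
    \<longleftrightarrow> (\<forall>n. 1 \<le> n \<and> n \<le> m \<longrightarrow> (\<forall>y\<in>M. 0 \<le> hyper_form (compression M T) n y))"
proof -
  have "hinner (Bop M (compression M T) n y) y = of_real (hyper_form (compression M T) n y)"
    if "y \<in> M" for n y
  proof (rule hinner_Bop_self[OF compression_in[OF M] _ _ that])
    show "adj_on M (compression M T) u \<in> M" if "u \<in> M" for u
      by (simp add: adj_on_compression[OF T M that] proj_in[OF M])
    show "hinner (adj_on M (compression M T) u) w = hinner u (compression M T w)"
      if "u \<in> M" "w \<in> M" for u w
      using that by (simp add: adj_on_compression[OF T M] compression_def proj_hinner_left[OF M]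
          proj_hinner_right[OF M] hinner_adj_left[OF T])
  qed
  then show ?thesis
    by (simp add: m_hypercontraction_on_def op_nonneg_on_def complex_of_real_nonneg_iff)
qed

lemma continuous_on_hyper_form_compression:
  assumes T: "bounded_op T" and M: "closed_csubspace M"
  shows "continuous_on M (hyper_form (compression M T) n)"
proof -
  let ?P = "\<lambda>x. proj M (T x)"
  have "bounded_linear ?P"
    using bounded_linear_compose[OF bounded_op_bounded_linear[OF bounded_op_proj[OF M]]
        bounded_op_bounded_linear[OF T]] .
  then have "bounded_linear (?P ^^ j)" for j
  proof (induction j)
    case (Suc j)
    then show ?case
      using bounded_linear_compose[OF \<open>bounded_linear ?P\<close>] by (simp add: comp_def)
  qed (simp add: id_def bounded_linear_ident)
  then have "continuous_on M (hyper_form ?P n)"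
    unfolding hyper_form_def by (intro continuous_intros linear_continuous_on)
  moreover have "(compression M T ^^ j) y = (?P ^^ j) y" if "y \<in> M" for j y
    using funpow_in[of M ?P, OF proj_in[OF M] that]
    by (induction j) (simp_all add: compression_def)
  then have "hyper_form ?P n y = hyper_form (compression M T) n y" if "y \<in> M" for y
    using that by (simp add: hyper_form_def)
  ultimately show ?thesis
    by (rule continuous_on_eq)
qed

section \<open>Regular expansive operators\<close>

lemma hinner_Delta: "bounded_op T \<Longrightarrow> hinner (Delta T x) y = hinner (T x) (T y) - hinner x y"
  by (simp add: Delta_def hinner_diff_left hinner_adj_left)

lemma Delta_selfadjoint:
  assumes "bounded_op T"
  shows "hinner (Delta T x) y = hinner x (Delta T y)"
proof -
  have "hinner (Delta T x) y = hinner (T x) (T y) - hinner x y"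
    by (rule hinner_Delta[OF assms])
  also have "\<dots> = hinner x (Delta T y)"
    by (simp add: Delta_def hinner_diff_right hinner_adj_right[OF assms])
  finally show ?thesis .
qed

lemma hinner_Delta_self: "bounded_op T \<Longrightarrow> hinner (Delta T x) x = of_real ((norm (T x))\<^sup>2 - (norm x)\<^sup>2)"
  by (simp add: hinner_Delta hinner_norm)

lemma bounded_op_Delta:
  assumes T: "bounded_op T"
  shows "bounded_op (Delta T)"
proof -
  obtain K1 where K1: "K1 \<ge> 0" "\<And>x. norm (T x) \<le> K1 * norm x"
    using bounded_op_nonneg_bound[OF T] by blast
  obtain K2 where K2: "K2 \<ge> 0" "\<And>x. norm (adj T x) \<le> K2 * norm x"
    using bounded_op_nonneg_bound[OF bounded_op_adj[OF T]] by blast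
  show ?thesis
  proof (rule bounded_opI[where K = "K2 * K1 + 1"])
    show "clinear_op (Delta T)"
      using bounded_op_clinear_op[OF T] bounded_op_clinear_op[OF bounded_op_adj[OF T]]
      by (simp add: clinear_op_def Delta_def hscale_diff_right)
    fix x
    have "norm (Delta T x) \<le> norm (adj T (T x)) + norm x"
      unfolding Delta_def by (rule norm_triangle_ineq4)
    also have "norm (adj T (T x)) \<le> K2 * (K1 * norm x)"
      using K2(2)[of "T x"] mult_left_mono[OF K1(2)[of x] K2(1)] by linarith
    finally show "norm (Delta T x) \<le> (K2 * K1 + 1) * norm x"
      by (simp add: algebra_simps)
  qed
qed

text \<open>After a single decrease, all later increments stay below that negative step.\<close>
lemma concave_nonneg_seq_mono:
  fixes a :: "nat \<Rightarrow> real"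
  assumes concave: "\<And>n. a (Suc (Suc n)) - 2 * a (Suc n) + a n \<le> 0" and nonneg: "\<And>n. a n \<ge> 0"
  shows "a n \<le> a (Suc n)"
proof (rule ccontr)
  assume "\<not> a n \<le> a (Suc n)"
  define d where "d = a (Suc n) - a n"
  have "d < 0"
    using \<open>\<not> a n \<le> a (Suc n)\<close> by (simp add: d_def)
  have step: "a (Suc (n + k)) - a (n + k) \<le> d" for k
  proof (induction k)
    case (Suc k)
    then show ?case
      using concave[of "n + k"] by simp
  qed (simp add: d_def)
  have below: "a (n + k) \<le> a n + real k * d" for k
  proof (induction k)
    case (Suc k)
    then show ?case
      using step[of k] by (simp add: algebra_simps)
  qed simp
  obtain k :: nat where "a n / (- d) < k"
    using reals_Archimedean2 by blast
  then have "a n + real k * d < 0"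
    using \<open>d < 0\<close> by (simp add: field_simps)
  then show False
    using below[of k] nonneg[of "n + k"] by linarith
qed

lemma concave_op_Delta_nonneg:
  assumes T: "bounded_op T" and "concave_op T"
  shows "op_nonneg_on UNIV (Delta T)"
  unfolding op_nonneg_on_def
proof
  fix x :: 'a
  have powers: "hinner ((adj T ^^ j) ((T ^^ j) y)) y = of_real ((norm ((T ^^ j) y))\<^sup>2)" for j y
    using hinner_funpow_adjoint[of UNIV T "adj T" "(T ^^ j) y" y j]
    by (simp add: hinner_adj_left[OF T] hinner_norm)
  have concave_at: "(norm ((T ^^ 2) y))\<^sup>2 - 2 * (norm (T y))\<^sup>2 + (norm y)\<^sup>2 \<le> 0" for y
  proof -
    have "hinner ((adj T ^^ 2) ((T ^^ 2) y) - hscale 2 (adj T (T y)) + y) y \<le> 0"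
      using \<open>concave_op T\<close> by (simp add: concave_op_def op_nonpos_on_def)
    also have "hinner ((adj T ^^ 2) ((T ^^ 2) y) - hscale 2 (adj T (T y)) + y) y
        = of_real ((norm ((T ^^ 2) y))\<^sup>2 - 2 * (norm (T y))\<^sup>2 + (norm y)\<^sup>2)"
      unfolding hinner_add_left hinner_diff_left hinner_hscale_left powers hinner_adj_left[OF T]
      by (simp add: hinner_norm)
    finally show ?thesis
      by (simp only: complex_of_real_nonpos_iff)
  qed
  have "(norm ((T ^^ 0) x))\<^sup>2 \<le> (norm ((T ^^ Suc 0) x))\<^sup>2"
  proof (rule concave_nonneg_seq_mono[where a = "\<lambda>n. (norm ((T ^^ n) x))\<^sup>2"])
    fix n
    have "(T ^^ 2) ((T ^^ n) x) = (T ^^ Suc (Suc n)) x"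
      by (simp add: numeral_2_eq_2)
    then show "(norm ((T ^^ Suc (Suc n)) x))\<^sup>2 - 2 * (norm ((T ^^ Suc n) x))\<^sup>2 + (norm ((T ^^ n) x))\<^sup>2 \<le> 0"
      using concave_at[of "(T ^^ n) x"] by simp
  qed simp
  then show "hinner (Delta T x) x \<ge> 0"
    unfolding hinner_Delta_self[OF T] complex_of_real_nonneg_iff by simp
qed

lemma selfadjoint_kernel_orthogonal_closure_range:
  assumes selfadjoint: "\<And>x y. hinner (B x) y = hinner x (B y)" and "B w = 0"
    and "m \<in> closure (range B)"
  shows "hinner w m = 0"
proof -
  have "range B \<subseteq> {m. hinner w m = 0}"
    using \<open>B w = 0\<close> by (auto simp flip: selfadjoint)
  moreover have "closed {m. hinner w m = 0}"
    by (intro closed_Collect_eq continuous_on_const linear_continuous_on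
        bounded_bilinear.bounded_linear_right[OF bounded_bilinear_hinner])
  ultimately show ?thesis
    using \<open>m \<in> closure (range B)\<close> closure_minimal by blast
qed

lemma selfadjoint_sqrt_in_closure_range:
  assumes S: "clinear_op S" and selfadjoint: "\<And>x y. hinner (S x) y = hinner x (S y)"
    and square: "\<And>x. S (S x) = B x"
  shows "S y \<in> closure (range B)"
proof -
  let ?M = "closure (range B)"
  have "clinear_op B"
    using S by (simp add: clinear_op_def flip: square)
  then have M: "closed_csubspace ?M"
    by (rule closed_csubspace_closure_range)
  define q where "q = S y - proj ?M (S y)"
  have q_orthogonal: "hinner q u = 0" if "u \<in> ?M" for u
    unfolding q_def by (rule proj_orthogonal[OF M that])
  have "B q = 0"
  proof (rule hinner_left_ext)
    fix z
    have "hinner q (B z) = 0"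
      by (rule q_orthogonal) (simp add: closure_subset[THEN subsetD])
    then show "hinner (B q) z = hinner 0 z"
      by (simp add: selfadjoint flip: square)
  qed
  then have "hinner (S q) (S q) = 0"
    by (simp add: selfadjoint square)
  then have "S q = 0"
    by (simp add: hinner_self_eq_0)
  have "hinner q q = hinner (S y) q - hinner (proj ?M (S y)) q"
    unfolding q_def by (rule hinner_diff_left)
  also have "hinner (S y) q = 0"
    by (simp add: selfadjoint \<open>S q = 0\<close>)
  also have "hinner (proj ?M (S y)) q = 0"
    using q_orthogonal[OF proj_in[OF M]] by (metis hinner_sym complex_cnj_zero)
  finally have "q = 0"
    by (simp add: hinner_self_eq_0)
  then have "proj ?M (S y) = S y"
    by (simp add: q_def)
  with proj_in[OF M, of "S y"] show ?thesis
    by simp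
qed

text \<open>The defect operator \<open>\<Delta>\<^sub>T\<close> is nonnegative exactly when \<open>T\<close> is expansive, which is all of
  concavity that the argument uses.\<close>
locale regular_expansive_op =
  fixes T :: "'a::complex_hilbert \<Rightarrow> 'a"
  assumes bounded: "bounded_op T"
    and regular: "Delta_regular T"
    and expansive: "op_nonneg_on UNIV (Delta T)"
begin

abbreviation "M \<equiv> closure (range (Delta T))"
abbreviation "S \<equiv> op_sqrt (Delta T)"

lemma closed_csubspace_M: "closed_csubspace M"
  by (rule closed_csubspace_closure_range[OF bounded_op_clinear_op[OF bounded_op_Delta[OF bounded]]])

lemma sqrt_Delta:
  shows clinear_op_S: "clinear_op S"
    and S_selfadjoint: "hinner (S x) y = hinner x (S y)"
    and S_S: "S (S x) = Delta T x"
  using bounded_op_op_sqrt op_nonneg_op_sqrt op_sqrt_op_sqrt bounded_op_Delta[OF bounded] expansive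
  by (auto intro: bounded_op_clinear_op op_nonneg_selfadjoint)

lemma S_in_M: "S x \<in> M"
  by (rule selfadjoint_sqrt_in_closure_range[OF clinear_op_S S_selfadjoint S_S])

lemma closure_range_S: "closure (range S) = M"
proof
  show "closure (range S) \<subseteq> M"
    by (rule closure_minimal) (use S_in_M closed_csubspace_M in \<open>auto simp: closed_csubspace_def\<close>)
  show "M \<subseteq> closure (range S)"
    by (intro closure_mono) (auto simp flip: S_S)
qed

text \<open>Regularity makes \<open>S\<close> intertwine \<open>T\<close> with its compression: \<open>T (S x) - S (T x)\<close> lies in the
  kernel of \<open>S\<close>, which is orthogonal to \<open>M\<close>.\<close>
lemma S_intertwines: "S (T x) = compression M T (S x)"
proof -
  define w where "w = T (S x) - S (T x)"
  have "S w = 0"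
    using regular by (simp add: w_def Delta_regular_def clinear_op_diff[OF clinear_op_S] S_S)
  then have "Delta T w = 0"
    by (metis S_S clinear_op_zero[OF clinear_op_S])
  then have "hinner w y = 0" if "y \<in> M" for y
    using selfadjoint_kernel_orthogonal_closure_range[OF Delta_selfadjoint[OF bounded]] that
    by blast
  then have "proj M (T (S x)) = S (T x)"
    by (intro proj_eqI[OF closed_csubspace_M S_in_M]) (simp add: w_def)
  then show ?thesis
    by (simp add: compression_def S_in_M)
qed

lemma norm_S_squared: "(norm (S x))\<^sup>2 = (norm (T x))\<^sup>2 - (norm x)\<^sup>2"
proof -
  have "hinner (S x) (S x) = hinner (Delta T x) x"
    by (simp flip: S_selfadjoint add: S_S)
  then show ?thesis
    by (metis hinner_Delta_self[OF bounded] hinner_norm of_real_eq_iff)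
qed

lemma hyper_form_Suc: "hyper_form T (Suc n) x = - hyper_form (compression M T) n (S x)"
proof -
  have "(compression M T ^^ j) (S x) = S ((T ^^ j) x)" for j
    by (induction j) (simp_all add: S_intertwines)
  then have "(norm ((compression M T ^^ j) (S x)))\<^sup>2
      = (norm ((T ^^ Suc j) x))\<^sup>2 - (norm ((T ^^ j) x))\<^sup>2" for j
    by (simp add: norm_S_squared)
  then show ?thesis
    unfolding hyper_form_def alternating_binomial_sum_Suc by simp
qed

lemma hyper_form_compression_nonneg_iff:
  "(\<forall>y\<in>M. 0 \<le> hyper_form (compression M T) n y) \<longleftrightarrow> (\<forall>x. 0 \<le> hyper_form (compression M T) n (S x))"
proof
  assume "\<forall>x. 0 \<le> hyper_form (compression M T) n (S x)"
  then have "range S \<subseteq> {y \<in> M. 0 \<le> hyper_form (compression M T) n y}"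
    using S_in_M by auto
  moreover have "closed {y \<in> M. 0 \<le> hyper_form (compression M T) n y}"
    using closed_csubspace_M
    by (intro continuous_on_closed_Collect_le continuous_on_const
        continuous_on_hyper_form_compression[OF bounded]) (simp_all add: closed_csubspace_def)
  ultimately show "\<forall>y\<in>M. 0 \<le> hyper_form (compression M T) n y"
    using closure_minimal closure_range_S by blast
qed (simp add: S_in_M)

lemma m_hyperexpansive_iff_compression_hypercontraction:
  "m_hyperexpansive m T \<longleftrightarrow> m_hypercontraction_on M (m - 1) (compression M T)"
proof -
  have "m_hyperexpansive m T \<longleftrightarrow> (\<forall>n. 1 \<le> n \<and> n \<le> m \<longrightarrow> (\<forall>x. hyper_form T n x \<le> 0))"
    by (rule m_hyperexpansive_iff_hyper_form[OF bounded])
  also have "\<dots> \<longleftrightarrow> (\<forall>k. 1 \<le> k \<and> k \<le> m - 1 \<longrightarrow> (\<forall>x. 0 \<le> hyper_form (compression M T) k (S x)))"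
  proof (intro iffI allI impI)
    fix k x
    assume "\<forall>n. 1 \<le> n \<and> n \<le> m \<longrightarrow> (\<forall>x. hyper_form T n x \<le> 0)" "1 \<le> k \<and> k \<le> m - 1"
    then have "hyper_form T (Suc k) x \<le> 0"
      by auto
    then show "0 \<le> hyper_form (compression M T) k (S x)"
      by (simp add: hyper_form_Suc)
  next
    fix n x
    assume H: "\<forall>k. 1 \<le> k \<and> k \<le> m - 1 \<longrightarrow> (\<forall>x. 0 \<le> hyper_form (compression M T) k (S x))"
      and n: "1 \<le> n \<and> n \<le> m"
    then obtain k where "n = Suc k"
      using not0_implies_Suc by force
    text \<open>For \<open>n = 1\<close> the inequality is automatic, as \<open>hyper_form _ 0\<close> is the squared norm.\<close>
    have "hyper_form T (Suc 0) x \<le> 0"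
      unfolding hyper_form_Suc by (simp add: hyper_form_def)
    with H n \<open>n = Suc k\<close> show "hyper_form T n x \<le> 0"
      by (cases "k = 0") (auto simp: hyper_form_Suc)
  qed
  also have "\<dots> \<longleftrightarrow> (\<forall>k. 1 \<le> k \<and> k \<le> m - 1 \<longrightarrow> (\<forall>y\<in>M. 0 \<le> hyper_form (compression M T) k y))"
    by (simp add: hyper_form_compression_nonneg_iff)
  also have "\<dots> \<longleftrightarrow> m_hypercontraction_on M (m - 1) (compression M T)"
    by (rule m_hypercontraction_on_compression_iff_hyper_form[OF bounded closed_csubspace_M, symmetric])
  finally show ?thesis .
qed

end

theorem proposition3p3:
  fixes T :: "'a::complex_hilbert \<Rightarrow> 'a" and m :: nat
  assumes "bounded_op T"
    and "Delta_regular T"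
    and "concave_op T"
    and "m \<ge> 2"
  shows "m_hyperexpansive m T \<longleftrightarrow>
         m_hypercontraction_on (closure (range (Delta T))) (m - 1)
           (compression (closure (range (Delta T))) T)"
proof -
  interpret regular_expansive_op T
    using assms(1,2) concave_op_Delta_nonneg[OF assms(1,3)] by unfold_locales
  show ?thesis
    by (rule m_hyperexpansive_iff_compression_hypercontraction)
qed

end
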